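(* Let $A\subseteq {}^\bullet\mathbb{R}^n$ be an arbitrary subset and let $f,g:A\to{}^\bullet\mathbb{R}$ be (quasi-standard) smooth functions. If $f(x)=g(x)$ for all $x$ in a subset of $A$ that is dense in $A$ with respect to the $\omega$-topology, then $f(x)=g(x)$ for all $x\in A$.
   Context: Fermat reals: let $\mathbb{R}_o[t]$ be the set of maps $x:\mathbb{R}_{\ge0}\to\mathbb{R}$, $t\mapsto x_t$, of the form $x_t=r+\sum_{i=1}^k\alpha_i t^{a_i}+o(t)$ as $t\to0^+$, with $k\in\mathbb{N}$, $r,\alpha_i\in\mathbb{R}$, $a_i\in\mathbb{R}_{\ge0}$. Write $x\sim y$ iff $x_t=y_t+o(t)$ as $t\to0^+$. The ring of Fermat reals is ${}^\bullet\mathbb{R}:=\mathbb{R}_o[t]/\sim$ with pointwise operations; $\mathbb{R}\subseteq{}^\bullet\mathbb{R}$ via constant maps. For $a\in\mathbb{R}_{\ge1}$ let $\mathrm{d}t_a$ be the class of $t\mapsto t^{1/a}$. The standard part of $x=[x_t]$ is ${}^\circ x:=x_0$ (componentwise on ${}^\bullet\mathbb{R}^n$). Every $x\in{}^\bullet\mathbb{R}$ can be written uniquely as $x={}^\circ x+\sum_{i=1}^N\alpha_i\,\mathrm{d}t_{a_i}$ with $N\in\mathbb{N}$, $\alpha_i\in\mathbb{R}\setminus\{0\}$, $a_1>\dots>a_N\ge1$; the order of $x$ is $\omega(x):=a_1$ if $N\ge1$ and $\omega(x):=0$ if $N=0$. The $\omega$-topology on ${}^\bullet\mathbb{R}^n$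 is the topology induced by the metric $d_\omega(x,y):=\|{}^\circ x-{}^\circ y\|+\sum_{i=1}^n\omega(x_i-y_i)$; subsets carry the induced subspace topology. The Fermat topology on ${}^\bullet\mathbb{R}^n$ has as open sets the sets ${}^\bullet V:=\{x\in{}^\bullet\mathbb{R}^n:{}^\circ x\in V\}$ for $V\subseteq\mathbb{R}^n$ open. For $\alpha\in C^\infty(W,\mathbb{R}^m)$ with $W\subseteq\mathbb{R}^d$ open, its extension ${}^\bullet\alpha:{}^\bullet W\to{}^\bullet\mathbb{R}^m$ is ${}^\bullet\alpha([x_t]):=[\alpha(x_t)]$. A map $f:S\to{}^\bullet\mathbb{R}^m$ with $S\subseteq{}^\bullet\mathbb{R}^n$ is (quasi-standard) smooth if for every $x\in S$ there exist an open $V\subseteq\mathbb{R}^n$ with $x\in{}^\bullet V$, an open $P\subseteq\mathbb{R}^{\mathsf p}$, a parameter $p\in{}^\bullet P$ and $\alpha\in C^\infty(P\times V,\mathbb{R}^m)$ such that $f(y)={}^\bullet\alpha(p,y)$ for all $y\in{}^\bullet V\cap S$. *)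

theory Defs
  imports "HOL-Analysis.Analysis"
begin

text \<open>Maps x : R_{>=0} -> R are represented by functions real => real; values at t < 0
  play no role. A function h is o(t) as t -> 0+ (on R_{>=0}) iff h 0 = 0 and h t / t -> 0.\<close>

definition little_o :: "(real \<Rightarrow> real) \<Rightarrow> bool" where
  "little_o h \<longleftrightarrow> h 0 = 0 \<and> ((\<lambda>t. h t / t) \<longlongrightarrow> 0) (at_right 0)"

text \<open>t^a with the convention t^0 = 1 (also at t = 0).\<close>
definition tpow :: "real \<Rightarrow> real \<Rightarrow> real" where
  "tpow t a = (if a = 0 then 1 else t powr a)"

definition Ro :: "(real \<Rightarrow> real) set" where
  "Ro = {x. \<exists>(r::real) (k::nat) (\<alpha>::nat \<Rightarrow> real) (a::nat \<Rightarrow> real).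
            (\<forall>i<k. 0 \<le> a i) \<and>
            little_o (\<lambda>t. x t - (r + (\<Sum>i<k. \<alpha> i * tpow t (a i))))}"

definition fsim :: "(real \<Rightarrow> real) \<Rightarrow> (real \<Rightarrow> real) \<Rightarrow> bool" where
  "fsim x y \<longleftrightarrow> little_o (\<lambda>t. x t - y t)"

typedef fermat = "{C. \<exists>x. x \<in> Ro \<and> C = {y. y \<in> Ro \<and> fsim x y}}"
proof -
  have "(\<lambda>t::real. 0::real) \<in> Ro"
    unfolding Ro_def little_o_def
    by (rule CollectI, rule exI[of _ 0], rule exI[of _ 0]) auto
  then show ?thesis by blast
qed

definition fclass :: "(real \<Rightarrow> real) \<Rightarrow> fermat" where
  "fclass x = Abs_fermat {y. y \<in> Ro \<and> fsim x y}"

definition frep :: "fermat \<Rightarrow> real \<Rightarrow> real" where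
  "frep u = (SOME x. x \<in> Rep_fermat u)"

definition fzero :: fermat where "fzero = fclass (\<lambda>t. 0)"

definition fdiff :: "fermat \<Rightarrow> fermat \<Rightarrow> fermat" where
  "fdiff u v = fclass (\<lambda>t. frep u t - frep v t)"

definition st :: "fermat \<Rightarrow> real" where
  "st u = frep u 0"

text \<open>Decomposition x = st x + sum_{i<N} alpha_i dt_{a_i}, with dt_a = [t |-> t^(1/a)].\<close>
definition fdecomp :: "fermat \<Rightarrow> nat \<Rightarrow> (nat \<Rightarrow> real) \<Rightarrow> (nat \<Rightarrow> real) \<Rightarrow> bool" where
  "fdecomp u N \<alpha> a \<longleftrightarrow> (\<forall>i<N. \<alpha> i \<noteq> 0) \<and> (\<forall>i<N. 1 \<le> a i) \<and>
     (\<forall>i j. i < j \<and> j < N \<longrightarrow> a j < a i) \<and>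
     u = fclass (\<lambda>t. st u + (\<Sum>i<N. \<alpha> i * t powr (1 / a i)))"

definition omega :: "fermat \<Rightarrow> real" where
  "omega u = (THE w. \<exists>N \<alpha> a. fdecomp u N \<alpha> a \<and> w = (if N = 0 then 0 else a 0))"

text \<open>R^d is represented by the functions nat => real vanishing from index d on
  (with the product topology this is the usual topology of R^d); likewise for Fermat reals.\<close>
definition rvec :: "nat \<Rightarrow> (nat \<Rightarrow> real) set" where
  "rvec d = {x. \<forall>i\<ge>d. x i = 0}"

definition fvec :: "nat \<Rightarrow> (nat \<Rightarrow> fermat) set" where
  "fvec d = {x. \<forall>i\<ge>d. x i = fzero}"

definition stv :: "nat \<Rightarrow> (nat \<Rightarrow> fermat) \<Rightarrow> nat \<Rightarrow> real" where
  "stv d x = (\<lambda>i. if i < d then st (x i) else 0)"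

definition ropen :: "nat \<Rightarrow> (nat \<Rightarrow> real) set \<Rightarrow> bool" where
  "ropen d V \<longleftrightarrow> V \<subseteq> rvec d \<and> openin (top_of_set (rvec d)) V"

definition fext_set :: "nat \<Rightarrow> (nat \<Rightarrow> real) set \<Rightarrow> (nat \<Rightarrow> fermat) set" where
  "fext_set d V = {x \<in> fvec d. stv d x \<in> V}"

definition d_omega :: "nat \<Rightarrow> (nat \<Rightarrow> fermat) \<Rightarrow> (nat \<Rightarrow> fermat) \<Rightarrow> real" where
  "d_omega n x y = sqrt (\<Sum>i<n. (st (x i) - st (y i))\<^sup>2) + (\<Sum>i<n. omega (fdiff (x i) (y i)))"

definition omega_open :: "nat \<Rightarrow> (nat \<Rightarrow> fermat) set \<Rightarrow> bool" where
  "omega_open n U \<longleftrightarrow> U \<subseteq> fvec n \<and>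
     (\<forall>x\<in>U. \<exists>e>0. \<forall>y\<in>fvec n. d_omega n x y < e \<longrightarrow> y \<in> U)"

definition omega_topology :: "nat \<Rightarrow> (nat \<Rightarrow> fermat) topology" where
  "omega_topology n = topology (omega_open n)"

definition partial :: "nat \<Rightarrow> ((nat \<Rightarrow> real) \<Rightarrow> real) \<Rightarrow> (nat \<Rightarrow> real) \<Rightarrow> real" where
  "partial i G x = deriv (\<lambda>s. G (x(i := s))) (x i)"

fun iter_partial :: "nat list \<Rightarrow> ((nat \<Rightarrow> real) \<Rightarrow> real) \<Rightarrow> (nat \<Rightarrow> real) \<Rightarrow> real" where
  "iter_partial [] G = G"
| "iter_partial (i # is) G = partial i (iter_partial is G)"

definition smooth_on :: "nat \<Rightarrow> (nat \<Rightarrow> real) set \<Rightarrow> ((nat \<Rightarrow> real) \<Rightarrow> real) \<Rightarrow> bool" where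
  "smooth_on d W G \<longleftrightarrow>
     (\<forall>is. set is \<subseteq> {..<d} \<longrightarrow>
        continuous_on W (iter_partial is G) \<and>
        (\<forall>i<d. \<forall>x\<in>W. (\<lambda>s. iter_partial is G (x(i := s))) differentiable (at (x i))))"

definition fextend :: "nat \<Rightarrow> ((nat \<Rightarrow> real) \<Rightarrow> real) \<Rightarrow> (nat \<Rightarrow> fermat) \<Rightarrow> fermat" where
  "fextend d G x = fclass (\<lambda>t. G (\<lambda>i. if i < d then frep (x i) t else 0))"

definition vconcat :: "nat \<Rightarrow> (nat \<Rightarrow> 'a) \<Rightarrow> (nat \<Rightarrow> 'a) \<Rightarrow> nat \<Rightarrow> 'a" where
  "vconcat pd p y = (\<lambda>i. if i < pd then p i else y (i - pd))"

definition rprod :: "nat \<Rightarrow> nat \<Rightarrow> (nat \<Rightarrow> real) set \<Rightarrow> (nat \<Rightarrow> real) set \<Rightarrow> (nat \<Rightarrow> real) set" where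
  "rprod pd n P V = {vconcat pd p y | p y. p \<in> P \<and> y \<in> V}"

definition qs_smooth :: "nat \<Rightarrow> (nat \<Rightarrow> fermat) set \<Rightarrow> ((nat \<Rightarrow> fermat) \<Rightarrow> fermat) \<Rightarrow> bool" where
  "qs_smooth n S f \<longleftrightarrow>
     (\<forall>x\<in>S. \<exists>V pd P p G.
        ropen n V \<and> x \<in> fext_set n V \<and>
        ropen pd P \<and> p \<in> fext_set pd P \<and>
        smooth_on (pd + n) (rprod pd n P V) G \<and>
        (\<forall>y \<in> fext_set n V \<inter> S. f y = fextend (pd + n) G (vconcat pd p y)))"

end

theory Submission
  imports Defs
begin

text \<open>Fix x \<in> A. Near x, f and g are extensions of ordinary smooth functions of a parameter and of
  the point. Points at \<omega>-distance below 1 from x differ from x by a standard vector r, so density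
  yields points of D of the form x + r with r \<rightarrow> 0. A Taylor expansion of high enough order
  (the increments x_t - x_0 are Hoelder in t) writes f (x + r) modulo o(t) as a fixed finite
  family of functions m_j(t) with coefficients c_j(r) continuous in r, and likewise for g. The
  coefficient vectors whose combination is o(t) form a linear subspace, which is closed; hence the
  identity f (x + r) = g (x + r) survives the limit r \<rightarrow> 0.\<close>

section \<open>Little-o at 0 from the right\<close>

lemma little_o_zero: "little_o (\<lambda>t. 0)" by (simp add: little_o_def)

lemma little_o_add: "little_o f \<Longrightarrow> little_o g \<Longrightarrow> little_o (\<lambda>t. f t + g t)"
  unfolding little_o_def by (auto simp: add_divide_distrib intro: tendsto_add_zero)

lemma little_o_scale: "little_o f \<Longrightarrow> little_o (\<lambda>t. c * f t)"
  unfolding little_o_def by (auto dest: tendsto_mult_right_zero[where c=c] simp: mult.assoc)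

lemma little_o_minus: "little_o f \<Longrightarrow> little_o (\<lambda>t. - f t)"
  using little_o_scale[of f "-1"] by simp

lemma little_o_diff: "little_o f \<Longrightarrow> little_o g \<Longrightarrow> little_o (\<lambda>t. f t - g t)"
  using little_o_add[of f "\<lambda>t. - g t"] little_o_minus[of g] by simp

lemma little_o_sum: "finite I \<Longrightarrow> (\<And>i. i \<in> I \<Longrightarrow> little_o (f i)) \<Longrightarrow> little_o (\<lambda>t. \<Sum>i\<in>I. f i t)"
proof (induction I rule: finite_induct)
  case empty then show ?case by (simp add: little_o_zero)
next
  case (insert x F)
  then show ?case using little_o_add[of "f x" "\<lambda>t. \<Sum>i\<in>F. f i t"] by simp
qed

lemma little_o_cong: "little_o f \<Longrightarrow> (\<And>t. f t = g t) \<Longrightarrow> little_o g"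
  by (subgoal_tac "f = g") auto

lemma little_o_dominated:
  assumes "little_o g" "t1 > 0" "\<And>t. 0 \<le> t \<Longrightarrow> t \<le> t1 \<Longrightarrow> \<bar>h t\<bar> \<le> \<bar>g t\<bar>"
  shows "little_o h"
  unfolding little_o_def
proof
  show "h 0 = 0" using assms(1,2) assms(3)[of 0] by (simp add: little_o_def)
  have g0: "((\<lambda>t. g t / t) \<longlongrightarrow> 0) (at_right 0)"
    using assms(1) by (simp add: little_o_def)
  have g: "((\<lambda>t. \<bar>g t / t\<bar>) \<longlongrightarrow> 0) (at_right 0)"
    using tendsto_rabs_zero[OF g0] .
  have "eventually (\<lambda>t. norm (h t / t) \<le> \<bar>g t / t\<bar>) (at_right (0::real))"
    unfolding eventually_at_right_field
    by (rule exI[of _ t1]) (use assms in \<open>auto simp: abs_divide divide_right_mono\<close>)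
  then show "((\<lambda>t. h t / t) \<longlongrightarrow> 0) (at_right 0)"
    by (rule Lim_null_comparison[OF _ g])
qed

lemma little_o_abs: "little_o f \<Longrightarrow> little_o (\<lambda>t. \<bar>f t\<bar>)"
  by (rule little_o_dominated[of f 1]) auto

lemma little_o_powr:
  assumes "q > 1"
  shows "little_o (\<lambda>t. K * t powr q)"
  unfolding little_o_def
proof
  show "K * 0 powr q = 0" by simp
  have "((\<lambda>t. K * t powr (q - 1)) \<longlongrightarrow> K * 0) (at_right 0)"
    by (intro tendsto_intros tendsto_zero_powrI) (use assms in \<open>auto simp: eventually_at_right_field intro: exI[of _ 1]\<close>)
  moreover have "eventually (\<lambda>t. K * t powr (q - 1) = K * t powr q / t) (at_right (0::real))"
    unfolding eventually_at_right_field
    by (rule exI[of _ 1]) (auto simp: powr_diff)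
  ultimately show "((\<lambda>t. K * t powr q / t) \<longlongrightarrow> 0) (at_right 0)"
    using tendsto_cong by fastforce
qed

lemma little_o_tendsto:
  assumes "little_o h" shows "(h \<longlongrightarrow> 0) (at_right 0)"
proof -
  have "((\<lambda>t. h t / t * t) \<longlongrightarrow> 0 * 0) (at_right 0)"
    using assms unfolding little_o_def by (intro tendsto_intros) (auto intro: tendsto_ident_at)
  moreover have "eventually (\<lambda>t. h t / t * t = h t) (at_right (0::real))"
    unfolding eventually_at_right_field by (rule exI[of _ 1]) auto
  ultimately show ?thesis using tendsto_cong by fastforce
qed

lemma tendsto_at_right_bound:
  fixes h :: "real \<Rightarrow> real"
  assumes "(h \<longlongrightarrow> 0) (at_right 0)" "h 0 = 0" "e > 0"
  shows "\<exists>t1>0. \<forall>t. 0 \<le> t \<and> t \<le> t1 \<longrightarrow> \<bar>h t\<bar> \<le> e"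
proof -
  have "eventually (\<lambda>t. dist (h t) 0 < e) (at_right (0::real))"
    using assms(1,3) tendstoD by blast
  then obtain b where b: "b > 0" "\<forall>y>0. y < b \<longrightarrow> \<bar>h y\<bar> < e"
    unfolding eventually_at_right_field by auto
  show ?thesis
  proof (intro exI[of _ "b/2"] conjI allI impI)
    show "b/2 > 0" using b by simp
    fix t assume "0 \<le> t \<and> t \<le> b/2"
    then show "\<bar>h t\<bar> \<le> e"
    proof (cases "t = 0")
      case False
      then have "t > 0" "t < b" using \<open>0 \<le> t \<and> t \<le> b/2\<close> b(1) by auto
      then show ?thesis using b(2) by fastforce
    qed (use assms in auto)
  qed
qed

lemma tendsto_at_right_uniform_bound:
  fixes h :: "nat \<Rightarrow> real \<Rightarrow> real"
  assumes "\<forall>i<d. ((h i) \<longlongrightarrow> 0) (at_right 0) \<and> h i 0 = 0" "e > 0"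
  shows "\<exists>t1>0. \<forall>t. 0 \<le> t \<and> t \<le> t1 \<longrightarrow> (\<forall>i<d. \<bar>h i t\<bar> \<le> e)"
proof -
  have "\<forall>i. \<exists>t1. i < d \<longrightarrow> t1 > 0 \<and> (\<forall>t. 0 \<le> t \<and> t \<le> t1 \<longrightarrow> \<bar>h i t\<bar> \<le> e)"
  proof
    fix i
    show "\<exists>t1. i < d \<longrightarrow> t1 > 0 \<and> (\<forall>t. 0 \<le> t \<and> t \<le> t1 \<longrightarrow> \<bar>h i t\<bar> \<le> e)"
    proof (cases "i < d")
      case True
      then have "(h i \<longlongrightarrow> 0) (at_right 0)" "h i 0 = 0" using assms(1) by auto
      from tendsto_at_right_bound[OF this assms(2)] show ?thesis by blast
    qed blast
  qed
  from choice[OF this] obtain T where T0: "\<forall>i. i < d \<longrightarrow> T i > 0 \<and> (\<forall>t. 0 \<le> t \<and> t \<le> T i \<longrightarrow> \<bar>h i t\<bar> \<le> e)"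
    by blast
  then have T: "\<And>i. i < d \<Longrightarrow> T i > 0 \<and> (\<forall>t. 0 \<le> t \<and> t \<le> T i \<longrightarrow> \<bar>h i t\<bar> \<le> e)" by blast
  define t1 where "t1 = Min (insert 1 (T ` {..<d}))"
  have "t1 > 0" "\<And>i. i < d \<Longrightarrow> t1 \<le> T i" unfolding t1_def using T by (auto simp: Min_gr_iff)
  then show ?thesis
  proof (intro exI[of _ t1] conjI allI impI)
    fix t i assume t: "0 \<le> t \<and> t \<le> t1" and i: "i < d"
    have "t \<le> T i" using t \<open>i < d \<Longrightarrow> t1 \<le> T i\<close> i by linarith
    then show "\<bar>h i t\<bar> \<le> e" using T[OF i] t by blast
  qed
qed

lemma little_o_bounded:
  assumes "little_o h" shows "\<exists>t1>0. \<forall>t. 0 \<le> t \<and> t \<le> t1 \<longrightarrow> \<bar>h t\<bar> \<le> 1"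
  using tendsto_at_right_bound[OF little_o_tendsto[OF assms]] assms by (simp add: little_o_def)

lemma little_o_mult_bounded:
  assumes "little_o k" "t1 > 0" "\<And>t. 0 \<le> t \<Longrightarrow> t \<le> t1 \<Longrightarrow> \<bar>P t\<bar> \<le> B"
  shows "little_o (\<lambda>t. P t * k t)"
proof (rule little_o_dominated[OF little_o_scale[OF assms(1), of B] assms(2)])
  fix t assume t: "0 \<le> t" "t \<le> t1"
  have B: "B \<ge> 0" using assms(3)[OF t] by linarith
  have "\<bar>P t * k t\<bar> = \<bar>P t\<bar> * \<bar>k t\<bar>" by (simp add: abs_mult)
  also have "\<dots> \<le> B * \<bar>k t\<bar>" using assms(3)[OF t] by (simp add: mult_right_mono)
  finally show "\<bar>P t * k t\<bar> \<le> \<bar>B * k t\<bar>" using B by (simp add: abs_mult)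
qed

text \<open>The coefficient vectors c with \<Sum>j. c j * m j t = o(t) form a linear subspace of a
  finite-dimensional space, hence a closed set; the induction eliminates one function m a at a time.\<close>
lemma little_o_lincomb_closed:
  fixes m :: "'a \<Rightarrow> real \<Rightarrow> real"
  assumes "finite I"
  shows "\<And>c e. (\<forall>k::nat. little_o (\<lambda>t. \<Sum>j\<in>I. c k j * m j t)) \<Longrightarrow> (\<forall>j\<in>I. (\<lambda>k. c k j) \<longlonglongrightarrow> e j)
     \<Longrightarrow> little_o (\<lambda>t. \<Sum>j\<in>I. e j * m j t)"
  using assms
proof (induction I rule: finite_induct)
  case empty then show ?case by (simp add: little_o_zero)
next
  case (insert a I)
  show ?case
  proof (cases "\<exists>w. little_o (\<lambda>t. m a t + (\<Sum>j\<in>I. w j * m j t))")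
    case True
    then obtain w where w: "little_o (\<lambda>t. m a t + (\<Sum>j\<in>I. w j * m j t))" by blast
    define c' where "c' = (\<lambda>k j. c k j - c k a * w j)"
    have "little_o (\<lambda>t. (\<Sum>j\<in>insert a I. c k j * m j t) - c k a * (m a t + (\<Sum>j\<in>I. w j * m j t)))" for k
      using insert.prems(1) w by (intro little_o_diff little_o_scale) auto
    then have l1: "\<forall>k. little_o (\<lambda>t. \<Sum>j\<in>I. c' k j * m j t)"
      using insert.hyps by (auto simp: c'_def algebra_simps sum_subtractf sum_distrib_left elim!: little_o_cong)
    have l2: "\<forall>j\<in>I. (\<lambda>k. c' k j) \<longlonglongrightarrow> e j - e a * w j"
      unfolding c'_def using insert.prems(2) by (auto intro!: tendsto_intros)
    have "little_o (\<lambda>t. \<Sum>j\<in>I. (e j - e a * w j) * m j t)"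
      using insert.IH[OF l1 l2] .
    from little_o_add[OF this little_o_scale[OF w, of "e a"]]
    show ?thesis
      using insert.hyps by (auto simp: algebra_simps sum_subtractf sum_distrib_left elim!: little_o_cong)
  next
    case False
    have ca: "c k a = 0" for k
    proof (rule ccontr)
      assume "c k a \<noteq> 0"
      have "little_o (\<lambda>t. (1 / c k a) * (\<Sum>j\<in>insert a I. c k j * m j t))"
        using insert.prems(1) by (intro little_o_scale) auto
      moreover have "(1 / c k a) * (\<Sum>j\<in>insert a I. c k j * m j t) = m a t + (\<Sum>j\<in>I. (c k j / c k a) * m j t)" for t
        using insert.hyps \<open>c k a \<noteq> 0\<close> by (simp add: algebra_simps sum_distrib_left)
      ultimately have "little_o (\<lambda>t. m a t + (\<Sum>j\<in>I. (\<lambda>j. c k j / c k a) j * m j t))"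
        by (rule little_o_cong)
      then have "\<exists>w. little_o (\<lambda>t. m a t + (\<Sum>j\<in>I. w j * m j t))"
        by (rule exI[where x="\<lambda>j. c k j / c k a"])
      with False show False by simp
    qed
    have "(\<lambda>k. c k a) \<longlonglongrightarrow> e a" using insert.prems(2) by auto
    then have "(\<lambda>k. 0::real) \<longlonglongrightarrow> e a" using ca by simp
    then have ea: "e a = 0" using LIMSEQ_unique[OF tendsto_const] by metis
    have "\<forall>k. little_o (\<lambda>t. \<Sum>j\<in>I. c k j * m j t)"
      using insert.prems(1) insert.hyps ca by simp
    then have "little_o (\<lambda>t. \<Sum>j\<in>I. e j * m j t)" using insert.IH insert.prems(2) by auto
    then show ?thesis using insert.hyps ea by simp
  qed
qed

lemma little_o_powr_sum_lead_coeff: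
  fixes \<alpha> e \<beta> f :: "nat \<Rightarrow> real"
  assumes lo: "little_o (\<lambda>t. (\<Sum>i<N. \<alpha> i * t powr e i) - (\<Sum>j<M. \<beta> j * t powr f j))"
    and N: "N > 0" and e0: "0 < e 0" "e 0 \<le> 1"
    and ei: "\<forall>i. 0 < i \<and> i < N \<longrightarrow> e i > e 0" and fj: "\<forall>j<M. f j > e 0"
  shows "\<alpha> 0 = 0"
proof -
  obtain N' where N': "N = Suc N'" using N by (cases N) auto
  define h where "h = (\<lambda>t. (\<Sum>i<N. \<alpha> i * t powr e i) - (\<Sum>j<M. \<beta> j * t powr f j))"
  have h0: "((\<lambda>t. h t / t) \<longlongrightarrow> 0) (at_right 0)" using lo unfolding h_def little_o_def by simp
  have lim0: "((\<lambda>t. h t / t powr e 0) \<longlongrightarrow> 0) (at_right 0)"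
  proof (rule Lim_null_comparison[OF _ tendsto_rabs_zero[OF h0]])
    show "\<forall>\<^sub>F t in at_right 0. norm (h t / t powr e 0) \<le> \<bar>h t / t\<bar>"
      unfolding eventually_at_right_field
    proof (intro exI[of _ 1] conjI allI impI)
      fix t :: real assume t: "0 < t" "t < 1"
      have "t powr 1 \<le> t powr e 0" using powr_mono'[of "e 0" 1 t] e0 t by auto
      then have "t \<le> t powr e 0" using t by simp
      then show "norm (h t / t powr e 0) \<le> \<bar>h t / t\<bar>"
        using t by (simp add: abs_divide divide_left_mono)
    qed simp
  qed
  have eq: "\<forall>\<^sub>F t in at_right 0. \<alpha> 0 + (\<Sum>i<N'. \<alpha> (Suc i) * t powr (e (Suc i) - e 0))
        - (\<Sum>j<M. \<beta> j * t powr (f j - e 0)) = h t / t powr e 0"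
    unfolding eventually_at_right_field
  proof (intro exI[of _ 1] conjI allI impI)
    fix t :: real assume t: "0 < t" "t < 1"
    have "h t = \<alpha> 0 * t powr e 0 + (\<Sum>i<N'. \<alpha> (Suc i) * t powr e (Suc i)) - (\<Sum>j<M. \<beta> j * t powr f j)"
      unfolding h_def N' sum.lessThan_Suc_shift by simp
    then show "\<alpha> 0 + (\<Sum>i<N'. \<alpha> (Suc i) * t powr (e (Suc i) - e 0)) - (\<Sum>j<M. \<beta> j * t powr (f j - e 0))
        = h t / t powr e 0"
      using t by (simp add: powr_diff diff_divide_distrib add_divide_distrib sum_divide_distrib)
  qed simp
  have pw: "((\<lambda>t. t powr c) \<longlongrightarrow> 0) (at_right 0)" if "c > 0" for c :: real
    by (rule tendsto_zero_powrI) (use that in \<open>auto simp: eventually_at_right_field intro: exI[of _ 1]\<close>)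
  have "((\<lambda>t. \<alpha> 0 + (\<Sum>i<N'. \<alpha> (Suc i) * t powr (e (Suc i) - e 0))
        - (\<Sum>j<M. \<beta> j * t powr (f j - e 0))) \<longlongrightarrow> \<alpha> 0 + (\<Sum>i<N'. \<alpha> (Suc i) * 0) - (\<Sum>j<M. \<beta> j * 0)) (at_right 0)"
  proof (intro tendsto_intros pw)
    fix i assume "i \<in> {..<N'}" then show "e (Suc i) - e 0 > 0" using ei N' by auto
  next
    fix j assume "j \<in> {..<M}" then show "f j - e 0 > 0" using fj by auto
  qed
  then have "((\<lambda>t. h t / t powr e 0) \<longlongrightarrow> \<alpha> 0) (at_right 0)"
    using tendsto_cong[OF eq] by simp
  then show ?thesis using lim0 tendsto_unique[OF trivial_limit_at_right_real] by blast
qed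

section \<open>Representatives of Fermat reals\<close>

lemma fsim_refl: "fsim x x" by (simp add: fsim_def little_o_zero)

lemma fsim_sym: "fsim x y \<Longrightarrow> fsim y x"
  unfolding fsim_def using little_o_minus by fastforce

lemma fsim_trans: "fsim x y \<Longrightarrow> fsim y z \<Longrightarrow> fsim x z"
  unfolding fsim_def using little_o_add by fastforce

lemma fsim_at_0: "fsim x y \<Longrightarrow> x 0 = y 0"
  unfolding fsim_def little_o_def by simp

definition rpoly :: "(real \<times> real) list \<Rightarrow> real \<Rightarrow> real" where
  "rpoly L t = (\<Sum>p\<leftarrow>L. fst p * tpow t (snd p))"

definition nonneg_exps :: "(real \<times> real) list \<Rightarrow> bool" where
  "nonneg_exps L \<longleftrightarrow> (\<forall>p\<in>set L. snd p \<ge> 0)"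

lemma tpow_0[simp]: "tpow t 0 = 1" by (simp add: tpow_def)

lemma Ro_iff_rpoly: "x \<in> Ro \<longleftrightarrow> (\<exists>L. nonneg_exps L \<and> little_o (\<lambda>t. x t - rpoly L t))"
proof
  assume "x \<in> Ro"
  then have "\<exists>r (k::nat) \<alpha> a. (\<forall>i<k. 0 \<le> a i) \<and>
     little_o (\<lambda>t. x t - (r + (\<Sum>i<k. \<alpha> i * tpow t (a i))))" by (simp add: Ro_def)
  then obtain r and k::nat and \<alpha> a where ra0: "(\<forall>i<k. 0 \<le> a i) \<and>
     little_o (\<lambda>t. x t - (r + (\<Sum>i<k. \<alpha> i * tpow t (a i))))" by (elim exE) (rule that)
  note ra = conjunct1[OF ra0] conjunct2[OF ra0]
  define L where "L = (r, 0) # map (\<lambda>i. (\<alpha> i, a i)) [0..<k]"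
  have "nonneg_exps L" using ra(1) unfolding L_def nonneg_exps_def by auto
  moreover have "rpoly L t = r + (\<Sum>i<k. \<alpha> i * tpow t (a i))" for t
    unfolding L_def rpoly_def by (simp add: tpow_0 interv_sum_list_conv_sum_set_nat atLeast0LessThan o_def)
  ultimately show "\<exists>L. nonneg_exps L \<and> little_o (\<lambda>t. x t - rpoly L t)" using ra(2) by auto
next
  assume "\<exists>L. nonneg_exps L \<and> little_o (\<lambda>t. x t - rpoly L t)"
  then obtain L where L: "nonneg_exps L" "little_o (\<lambda>t. x t - rpoly L t)" by blast
  have "rpoly L t = 0 + (\<Sum>i<length L. fst (L!i) * tpow t (snd (L!i)))" for t
    unfolding rpoly_def by (simp add: sum_list_sum_nth atLeast0LessThan)
  moreover have "\<forall>i<length L. 0 \<le> snd (L!i)" using L(1) unfolding nonneg_exps_def by auto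
  ultimately show "x \<in> Ro" unfolding Ro_def using L(2)
    by (intro CollectI exI[of _ 0] exI[of _ "length L"] exI[of _ "\<lambda>i. fst (L!i)"] exI[of _ "\<lambda>i. snd (L!i)"] conjI) simp_all
qed

lemma rpoly_append: "rpoly (L @ M) t = rpoly L t + rpoly M t" by (simp add: rpoly_def)

lemma tpow_mult: "a \<ge> 0 \<Longrightarrow> b \<ge> 0 \<Longrightarrow> tpow t a * tpow t b = tpow t (a + b)"
  by (simp add: tpow_def powr_add)

definition pmul :: "(real \<times> real) list \<Rightarrow> (real \<times> real) list \<Rightarrow> (real \<times> real) list" where
  "pmul L M = concat (map (\<lambda>p. map (\<lambda>q. (fst p * fst q, snd p + snd q)) M) L)"

lemma rpoly_pmul:
  assumes "nonneg_exps L" "nonneg_exps M"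
  shows "rpoly (pmul L M) t = rpoly L t * rpoly M t"
  using assms
proof (induction L)
  case Nil then show ?case by (simp add: rpoly_def pmul_def)
next
  case (Cons p L)
  have gL: "nonneg_exps L" and p: "snd p \<ge> 0" using Cons.prems by (auto simp: nonneg_exps_def)
  have "rpoly (map (\<lambda>q. (fst p * fst q, snd p + snd q)) M) t = fst p * tpow t (snd p) * rpoly M t"
    using Cons.prems(2)
  proof (induction M)
    case Nil then show ?case by (simp add: rpoly_def)
  next
    case (Cons q M)
    then have "snd q \<ge> 0" "nonneg_exps M" by (auto simp: nonneg_exps_def)
    then show ?case using Cons p by (simp add: rpoly_def algebra_simps tpow_mult[symmetric])
  qed
  moreover have "pmul (p # L) M = map (\<lambda>q. (fst p * fst q, snd p + snd q)) M @ pmul L M"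
    by (simp add: pmul_def)
  ultimately show ?case using Cons.IH[OF gL Cons.prems(2)]
    by (simp add: rpoly_append) (simp add: rpoly_def algebra_simps)
qed

lemma nonneg_exps_pmul: "nonneg_exps L \<Longrightarrow> nonneg_exps M \<Longrightarrow> nonneg_exps (pmul L M)"
  unfolding nonneg_exps_def pmul_def by auto

lemma tpow_bound: "0 \<le> t \<Longrightarrow> t \<le> 1 \<Longrightarrow> a \<ge> 0 \<Longrightarrow> \<bar>tpow t a\<bar> \<le> 1"
  unfolding tpow_def by (auto intro: powr_le1)

lemma rpoly_bound: "nonneg_exps L \<Longrightarrow> 0 \<le> t \<Longrightarrow> t \<le> 1 \<Longrightarrow> \<bar>rpoly L t\<bar> \<le> (\<Sum>p\<leftarrow>L. \<bar>fst p\<bar>)"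
proof (induction L)
  case Nil then show ?case by (simp add: rpoly_def)
next
  case (Cons p L)
  have "\<bar>fst p * tpow t (snd p)\<bar> \<le> \<bar>fst p\<bar>"
    using tpow_bound[of t "snd p"] Cons.prems by (auto simp: nonneg_exps_def abs_mult intro: mult_left_le)
  moreover have "\<bar>rpoly L t\<bar> \<le> (\<Sum>p\<leftarrow>L. \<bar>fst p\<bar>)" using Cons by (auto simp: nonneg_exps_def)
  ultimately show ?case by (simp add: rpoly_def)
qed

lemma Ro_bounded:
  assumes "x \<in> Ro" shows "\<exists>B t1. t1 > 0 \<and> (\<forall>t. 0 \<le> t \<and> t \<le> t1 \<longrightarrow> \<bar>x t\<bar> \<le> B)"
proof -
  obtain L where L: "nonneg_exps L" "little_o (\<lambda>t. x t - rpoly L t)" using assms Ro_iff_rpoly by blast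
  obtain t1 where t1: "t1 > 0" "\<forall>t. 0 \<le> t \<and> t \<le> t1 \<longrightarrow> \<bar>x t - rpoly L t\<bar> \<le> 1"
    using little_o_bounded[OF L(2)] by blast
  show ?thesis
  proof (intro exI conjI allI impI)
    show "min t1 1 > 0" using t1 by simp
    fix t assume "0 \<le> t \<and> t \<le> min t1 1"
    then show "\<bar>x t\<bar> \<le> (\<Sum>p\<leftarrow>L. \<bar>fst p\<bar>) + 1"
      using t1(2) rpoly_bound[OF L(1), of t] by (smt (verit) min.boundedE)
  qed
qed

lemma Ro_const: "(\<lambda>t. c) \<in> Ro"
proof -
  have "rpoly [(c,0)] t = c" for t by (simp add: rpoly_def)
  then show ?thesis unfolding Ro_iff_rpoly nonneg_exps_def by (intro exI[of _ "[(c,0)]"]) (auto simp: little_o_zero)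
qed

lemma Ro_add: "x \<in> Ro \<Longrightarrow> y \<in> Ro \<Longrightarrow> (\<lambda>t. x t + y t) \<in> Ro"
proof -
  assume "x \<in> Ro" "y \<in> Ro"
  then obtain L M where L: "nonneg_exps L" "little_o (\<lambda>t. x t - rpoly L t)"
    and M: "nonneg_exps M" "little_o (\<lambda>t. y t - rpoly M t)" using Ro_iff_rpoly by meson
  have "nonneg_exps (L @ M)" using L M by (auto simp: nonneg_exps_def)
  moreover have "little_o (\<lambda>t. (x t + y t) - rpoly (L @ M) t)"
    using little_o_add[OF L(2) M(2)] by (simp add: rpoly_append algebra_simps)
  ultimately show ?thesis using Ro_iff_rpoly by blast
qed

lemma Ro_scale: "x \<in> Ro \<Longrightarrow> (\<lambda>t. c * x t) \<in> Ro"
proof -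
  assume "x \<in> Ro"
  then obtain L where L: "nonneg_exps L" "little_o (\<lambda>t. x t - rpoly L t)" using Ro_iff_rpoly by meson
  have "rpoly (map (\<lambda>p. (c * fst p, snd p)) L) t = c * rpoly L t" for t
    by (induction L) (auto simp: rpoly_def algebra_simps)
  moreover have "nonneg_exps (map (\<lambda>p. (c * fst p, snd p)) L)" using L by (auto simp: nonneg_exps_def)
  ultimately show ?thesis using little_o_scale[OF L(2), of c] Ro_iff_rpoly by (auto simp: algebra_simps)
qed

lemma Ro_diff: "x \<in> Ro \<Longrightarrow> y \<in> Ro \<Longrightarrow> (\<lambda>t. x t - y t) \<in> Ro"
  using Ro_add[of x "\<lambda>t. -1 * y t"] Ro_scale[of y "-1"] by simp

lemma Ro_mult: "x \<in> Ro \<Longrightarrow> y \<in> Ro \<Longrightarrow> (\<lambda>t. x t * y t) \<in> Ro"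
proof -
  assume xy: "x \<in> Ro" "y \<in> Ro"
  then obtain L M where L: "nonneg_exps L" "little_o (\<lambda>t. x t - rpoly L t)"
    and M: "nonneg_exps M" "little_o (\<lambda>t. y t - rpoly M t)" using Ro_iff_rpoly by meson
  obtain B1 t1 where b1: "t1 > 0" "\<forall>t. 0 \<le> t \<and> t \<le> t1 \<longrightarrow> \<bar>x t\<bar> \<le> B1" using Ro_bounded[OF xy(1)] by blast
  have l1: "little_o (\<lambda>t. x t * (y t - rpoly M t))"
    by (rule little_o_mult_bounded[OF M(2) b1(1)]) (use b1 in auto)
  have l2: "little_o (\<lambda>t. rpoly M t * (x t - rpoly L t))"
    by (rule little_o_mult_bounded[OF L(2), of 1 _ "\<Sum>p\<leftarrow>M. \<bar>fst p\<bar>"]) (use rpoly_bound[OF M(1)] in auto)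
  have "little_o (\<lambda>t. x t * y t - rpoly (pmul L M) t)"
    using little_o_add[OF l1 l2] by (simp add: rpoly_pmul[OF L(1) M(1)] algebra_simps)
  then show ?thesis using nonneg_exps_pmul[OF L(1) M(1)] Ro_iff_rpoly by blast
qed

lemma Ro_sum: "finite I \<Longrightarrow> (\<And>i. i \<in> I \<Longrightarrow> f i \<in> Ro) \<Longrightarrow> (\<lambda>t. \<Sum>i\<in>I. f i t) \<in> Ro"
proof (induction I rule: finite_induct)
  case empty then show ?case using Ro_const[of 0] by simp
next
  case (insert x F)
  then show ?case using Ro_add[of "f x" "\<lambda>t. \<Sum>i\<in>F. f i t"] by simp
qed

lemma Ro_prod_list: "(\<And>i. i \<in> set is \<Longrightarrow> g i \<in> Ro) \<Longrightarrow> (\<lambda>t. prod_list (map (\<lambda>i. g i t) is)) \<in> Ro"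
proof (induction "is")
  case Nil then show ?case using Ro_const[of 1] by simp
next
  case (Cons a "is")
  then show ?case using Ro_mult[of "g a" "\<lambda>t. prod_list (map (\<lambda>i. g i t) is)"] by simp
qed

lemma Ro_powr: "c > 0 \<Longrightarrow> (\<lambda>t. t powr c) \<in> Ro"
proof -
  assume c: "c > 0"
  have "rpoly [(1, c)] t = t powr c" for t using c by (simp add: rpoly_def tpow_def)
  then show ?thesis unfolding Ro_iff_rpoly nonneg_exps_def using c by (intro exI[of _ "[(1, c)]"]) (auto simp: little_o_zero)
qed

lemma rpoly_holder:
  assumes "nonneg_exps L" "\<forall>p\<in>set L. snd p > 0 \<longrightarrow> \<beta> \<le> snd p" "0 \<le> t" "t \<le> 1" "\<beta> > 0"
  shows "\<bar>rpoly L t - rpoly L 0\<bar> \<le> (\<Sum>p\<leftarrow>L. \<bar>fst p\<bar>) * t powr \<beta>"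
  using assms
proof (induction L)
  case Nil then show ?case by (simp add: rpoly_def)
next
  case (Cons p L)
  have IH: "\<bar>rpoly L t - rpoly L 0\<bar> \<le> (\<Sum>p\<leftarrow>L. \<bar>fst p\<bar>) * t powr \<beta>"
    using Cons by (auto simp: nonneg_exps_def)
  have tp: "\<bar>tpow t (snd p) - tpow 0 (snd p)\<bar> \<le> t powr \<beta>"
  proof (cases "snd p = 0")
    case False
    then have "snd p > 0" "\<beta> \<le> snd p" using Cons.prems by (auto simp: nonneg_exps_def)
    then have "t powr snd p \<le> t powr \<beta>" using powr_mono'[of \<beta> "snd p" t] Cons.prems by auto
    then show ?thesis using False by (simp add: tpow_def)
  qed simp
  have "fst p * tpow t (snd p) - fst p * tpow 0 (snd p) = fst p * (tpow t (snd p) - tpow 0 (snd p))"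
    by (simp add: algebra_simps)
  then have "\<bar>fst p * tpow t (snd p) - fst p * tpow 0 (snd p)\<bar> = \<bar>fst p\<bar> * \<bar>tpow t (snd p) - tpow 0 (snd p)\<bar>"
    by (simp add: abs_mult)
  also have "\<dots> \<le> \<bar>fst p\<bar> * t powr \<beta>" using tp by (rule mult_left_mono) simp
  finally have A: "\<bar>fst p * tpow t (snd p) - fst p * tpow 0 (snd p)\<bar> \<le> \<bar>fst p\<bar> * t powr \<beta>" .
  have "rpoly (p # L) t - rpoly (p # L) 0 = (fst p * tpow t (snd p) - fst p * tpow 0 (snd p)) + (rpoly L t - rpoly L 0)"
    by (simp add: rpoly_def)
  with A have "\<bar>rpoly (p # L) t - rpoly (p # L) 0\<bar> \<le> \<bar>fst p\<bar> * t powr \<beta> + (\<Sum>p\<leftarrow>L. \<bar>fst p\<bar>) * t powr \<beta>"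
    using IH abs_triangle_ineq[of "fst p * tpow t (snd p) - fst p * tpow 0 (snd p)" "rpoly L t - rpoly L 0"] by linarith
  then show ?case by (simp add: distrib_right)
qed

lemma Ro_holder:
  assumes "x \<in> Ro"
  shows "\<exists>\<beta> C t0. \<beta> > 0 \<and> \<beta> \<le> 1 \<and> t0 > 0 \<and> t0 \<le> 1 \<and> (\<forall>t. 0 \<le> t \<and> t \<le> t0 \<longrightarrow> \<bar>x t - x 0\<bar> \<le> C * t powr \<beta>)"
proof -
  obtain L where L: "nonneg_exps L" "little_o (\<lambda>t. x t - rpoly L t)" using assms Ro_iff_rpoly by blast
  define \<beta> where "\<beta> = Min (insert 1 {snd p | p. p \<in> set L \<and> snd p > 0})"
  have fin: "finite {snd p | p. p \<in> set L \<and> snd p > 0}"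
    by (rule finite_subset[of _ "snd ` set L"]) (force, simp)
  have b3: "\<forall>p\<in>set L. snd p > 0 \<longrightarrow> \<beta> \<le> snd p"
  proof (intro ballI impI)
    fix p assume "p \<in> set L" "snd p > 0"
    then have "snd p \<in> insert 1 {snd p | p. p \<in> set L \<and> snd p > 0}" by blast
    then show "\<beta> \<le> snd p" unfolding \<beta>_def by (rule Min_le[rotated]) (use fin in simp)
  qed
  have \<beta>: "\<beta> > 0" "\<beta> \<le> 1" "\<forall>p\<in>set L. snd p > 0 \<longrightarrow> \<beta> \<le> snd p"
    using b3 unfolding \<beta>_def using fin by (auto simp: Min_gr_iff)
  define h where "h = (\<lambda>t. x t - rpoly L t)"
  have h0: "h 0 = 0" using L(2) unfolding h_def little_o_def by simp
  have "((\<lambda>t. h t / t) \<longlongrightarrow> 0) (at_right 0)" using L(2) unfolding h_def little_o_def by simp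
  then obtain t1 where t1: "t1 > 0" "\<forall>t. 0 \<le> t \<and> t \<le> t1 \<longrightarrow> \<bar>h t / t\<bar> \<le> 1"
    using tendsto_at_right_bound[of "\<lambda>t. h t / t" 1] by auto
  show ?thesis
  proof (intro exI conjI allI impI)
    show "\<beta> > 0" "\<beta> \<le> 1" using \<beta> by auto
    show "min t1 1 > 0" "min t1 1 \<le> 1" using t1 by auto
    fix t :: real assume t: "0 \<le> t \<and> t \<le> min t1 1"
    have ht: "\<bar>h t\<bar> \<le> t powr \<beta>"
    proof (cases "t = 0")
      case True then show ?thesis using h0 by simp
    next
      case False
      then have "\<bar>h t\<bar> \<le> t" using t1(2) t by (auto simp: abs_divide divide_le_eq)
      also have "t = t powr 1" using False t by simp
      also have "\<dots> \<le> t powr \<beta>" using powr_mono'[of \<beta> 1 t] \<beta> t by auto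
      finally show ?thesis .
    qed
    have "x t - x 0 = (rpoly L t - rpoly L 0) + h t" using h0 unfolding h_def by simp
    then show "\<bar>x t - x 0\<bar> \<le> ((\<Sum>p\<leftarrow>L. \<bar>fst p\<bar>) + 1) * t powr \<beta>"
    proof -
      have "\<bar>rpoly L t - rpoly L 0\<bar> \<le> (\<Sum>p\<leftarrow>L. \<bar>fst p\<bar>) * t powr \<beta>"
        using rpoly_holder[OF L(1) \<beta>(3), of t] \<beta>(1) t by auto
      then have "\<bar>x t - x 0\<bar> \<le> (\<Sum>p\<leftarrow>L. \<bar>fst p\<bar>) * t powr \<beta> + t powr \<beta>"
        using ht \<open>x t - x 0 = (rpoly L t - rpoly L 0) + h t\<close> by linarith
      then show ?thesis by (simp add: distrib_right)
    qed
  qed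
qed

lemma Ro_tendsto: "x \<in> Ro \<Longrightarrow> ((\<lambda>t. x t - x 0) \<longlongrightarrow> 0) (at_right 0)"
proof -
  assume "x \<in> Ro"
  then obtain \<beta> C t0 where b: "\<beta> > 0" "t0 > 0" "\<forall>t. 0 \<le> t \<and> t \<le> t0 \<longrightarrow> \<bar>x t - x 0\<bar> \<le> C * t powr \<beta>"
    using Ro_holder by blast
  have "((\<lambda>t. C * t powr \<beta>) \<longlongrightarrow> C * 0) (at_right 0)"
    by (intro tendsto_intros tendsto_zero_powrI) (use b in \<open>auto simp: eventually_at_right_field intro: exI[of _ 1]\<close>)
  then have lim: "((\<lambda>t. C * t powr \<beta>) \<longlongrightarrow> 0) (at_right 0)" by simp
  have ev: "\<forall>\<^sub>F t in at_right 0. norm (x t - x 0) \<le> C * t powr \<beta>"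
    unfolding eventually_at_right_field using b by (intro exI[of _ t0]) auto
  show ?thesis by (rule Lim_null_comparison[OF ev lim])
qed

lemma Ro_holder_uniform:
  fixes \<phi> :: "nat \<Rightarrow> real \<Rightarrow> real"
  assumes phi: "\<forall>i<d. \<phi> i \<in> Ro"
  shows "\<exists>\<beta> t0 C. \<beta> > 0 \<and> t0 > 0 \<and> t0 \<le> 1 \<and>
    (\<forall>i t. i < d \<and> 0 \<le> t \<and> t \<le> t0 \<longrightarrow> \<bar>\<phi> i t - \<phi> i 0\<bar> \<le> C * t powr \<beta>)"
proof -
  have "\<forall>i. \<exists>\<beta> C t0. i < d \<longrightarrow> \<beta> > 0 \<and> \<beta> \<le> 1 \<and> t0 > 0 \<and> t0 \<le> 1 \<and>
      (\<forall>t. 0 \<le> t \<and> t \<le> t0 \<longrightarrow> \<bar>\<phi> i t - \<phi> i 0\<bar> \<le> C * t powr \<beta>)"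
    using Ro_holder phi by blast
  then obtain bf Cf tf where H: "\<And>i. i < d \<Longrightarrow> bf i > 0 \<and> bf i \<le> 1 \<and> tf i > 0 \<and> tf i \<le> 1 \<and>
      (\<forall>t. 0 \<le> t \<and> t \<le> tf i \<longrightarrow> \<bar>\<phi> i t - \<phi> i 0\<bar> \<le> Cf i * t powr bf i)"
    by metis
  define \<beta> where "\<beta> = Min (insert 1 (bf ` {..<d}))"
  define C where "C = (\<Sum>i<d. \<bar>Cf i\<bar>)"
  define t0 where "t0 = Min (insert 1 (tf ` {..<d}))"
  have \<beta>: "\<beta> > 0" "\<And>i. i < d \<Longrightarrow> \<beta> \<le> bf i" unfolding \<beta>_def using H by (auto simp: Min_gr_iff)
  have t0: "t0 > 0" "t0 \<le> 1" "\<And>i. i < d \<Longrightarrow> t0 \<le> tf i" unfolding t0_def using H by (auto simp: Min_gr_iff)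
  have "\<bar>\<phi> i t - \<phi> i 0\<bar> \<le> C * t powr \<beta>" if i: "i < d" and t: "0 \<le> t" "t \<le> t0" for i t
  proof -
    have "\<bar>\<phi> i t - \<phi> i 0\<bar> \<le> Cf i * t powr bf i" using H[OF i] t t0(3)[OF i] by auto
    also have "\<dots> \<le> \<bar>Cf i\<bar> * t powr \<beta>"
      using powr_mono'[of \<beta> "bf i" t] \<beta>(2)[OF i] t t0(2)
      by (intro mult_mono) auto
    also have "\<dots> \<le> C * t powr \<beta>"
      unfolding C_def by (intro mult_right_mono member_le_sum) (use i in auto)
    finally show ?thesis .
  qed
  then show ?thesis using \<beta>(1) t0(1,2) by blast
qed

lemma Rep_fclass: "x \<in> Ro \<Longrightarrow> Rep_fermat (fclass x) = {y. y \<in> Ro \<and> fsim x y}"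
  unfolding fclass_def by (rule Abs_fermat_inverse) auto

lemma Rep_fermat_class: "\<exists>x. x \<in> Ro \<and> Rep_fermat u = {y. y \<in> Ro \<and> fsim x y}"
  using Rep_fermat[of u] by auto

lemma frep_in_Rep: "frep u \<in> Rep_fermat u"
proof -
  obtain x where "x \<in> Ro" "Rep_fermat u = {y. y \<in> Ro \<and> fsim x y}" using Rep_fermat_class by blast
  then have "x \<in> Rep_fermat u" using fsim_refl by auto
  then show ?thesis unfolding frep_def by (metis someI)
qed

lemma Rep_frep: "Rep_fermat u = {y. y \<in> Ro \<and> fsim (frep u) y}"
proof -
  obtain x where x: "x \<in> Ro" "Rep_fermat u = {y. y \<in> Ro \<and> fsim x y}" using Rep_fermat_class by blast
  then have "fsim x (frep u)" using frep_in_Rep[of u] by auto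
  then show ?thesis using x by (auto intro: fsim_trans fsim_sym)
qed

lemma frep_Ro: "frep u \<in> Ro" using frep_in_Rep[of u] Rep_frep by auto

lemma fclass_frep: "fclass (frep u) = u"
  unfolding fclass_def Rep_frep[symmetric] by (rule Rep_fermat_inverse)

lemma fclass_eqI: "fsim a b \<Longrightarrow> fclass a = fclass b"
  unfolding fclass_def using fsim_sym fsim_trans by metis

lemma fclass_eqD:
  assumes "a \<in> Ro" "b \<in> Ro" "fclass a = fclass b" shows "fsim a b"
proof -
  have "{y. y \<in> Ro \<and> fsim a y} = {y. y \<in> Ro \<and> fsim b y}"
    using Rep_fclass[OF assms(1)] Rep_fclass[OF assms(2)] assms(3) by simp
  then have "b \<in> {y. y \<in> Ro \<and> fsim a y}" using assms(2) fsim_refl by auto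
  then show ?thesis by simp
qed

section \<open>The order \<omega>\<close>

lemma Ro_fdecomp_rep:
  fixes N :: nat
  assumes "\<forall>i<N. 1 \<le> a i"
  shows "(\<lambda>t. s + (\<Sum>i<N. \<alpha> i * t powr (1 / a i))) \<in> Ro"
  using assms by (intro Ro_add Ro_const Ro_sum Ro_scale Ro_powr) auto

lemma fdecomp_leading_exp_minimal:
  assumes d1: "fdecomp u N \<alpha> a" and d2: "fdecomp u N' \<beta> b" and N: "N > 0" and c: "N' = 0 \<or> b 0 < a 0"
  shows False
proof -
  let ?P = "\<lambda>t. st u + (\<Sum>i<N. \<alpha> i * t powr (1 / a i))"
  let ?Q = "\<lambda>t. st u + (\<Sum>i<N'. \<beta> i * t powr (1 / b i))"
  have a1: "\<forall>i<N. 1 \<le> a i" and b1: "\<forall>i<N'. 1 \<le> b i" using d1 d2 by (auto simp: fdecomp_def)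
  have "u = fclass ?P" using d1 by (simp add: fdecomp_def)
  moreover have "u = fclass ?Q" using d2 by (simp add: fdecomp_def)
  ultimately have "fclass ?P = fclass ?Q" by simp
  then have "fsim ?P ?Q" using Ro_fdecomp_rep[OF a1] Ro_fdecomp_rep[OF b1] fclass_eqD by blast
  then have lo: "little_o (\<lambda>t. (\<Sum>i<N. \<alpha> i * t powr (1 / a i)) - (\<Sum>j<N'. \<beta> j * t powr (1 / b j)))"
    unfolding fsim_def by simp
  have a0: "a 0 \<ge> 1" using a1 N by auto
  have "\<alpha> 0 = 0"
  proof (rule little_o_powr_sum_lead_coeff[OF lo N])
    show "0 < 1 / a 0" "1 / a 0 \<le> 1" using a0 by auto
    show "\<forall>i. 0 < i \<and> i < N \<longrightarrow> 1 / a 0 < 1 / a i"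
    proof (intro allI impI)
      fix i assume "0 < i \<and> i < N"
      then have "a i < a 0" "a i \<ge> 1" using d1 a1 unfolding fdecomp_def by auto
      then show "1 / a 0 < 1 / a i" by (simp add: frac_less2)
    qed
    show "\<forall>j<N'. 1 / a 0 < 1 / b j"
    proof (intro allI impI)
      fix j assume j: "j < N'"
      then have b0: "b 0 < a 0" using c by auto
      have "b j \<le> b 0" using d2 j unfolding fdecomp_def by (cases "j = 0") (auto simp: less_imp_le)
      moreover have "b j \<ge> 1" using b1 j by auto
      ultimately show "1 / a 0 < 1 / b j" using b0 by (simp add: frac_less2)
    qed
  qed
  then show False using d1 N unfolding fdecomp_def by auto
qed

lemma Ro_fsim_low_powr_sum:
  assumes "x \<in> Ro"
  shows "\<exists>S \<alpha> a. finite (S :: nat set) \<and> (\<forall>i\<in>S. 0 < a i \<and> a i \<le> 1) \<and>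
    fsim x (\<lambda>t. x 0 + (\<Sum>i\<in>S. \<alpha> i * t powr a i))"
proof -
  obtain r and k :: nat and \<alpha> a where a: "\<forall>i<k. 0 \<le> a i"
    and lo: "little_o (\<lambda>t. x t - (r + (\<Sum>i<k. \<alpha> i * tpow t (a i))))"
    using assms unfolding Ro_def by blast
  define Z where "Z = {i. i < k \<and> a i = 0}"
  define S where "S = {i. i < k \<and> 0 < a i \<and> a i \<le> 1}"
  define B where "B = {i. i < k \<and> 1 < a i}"
  have fin: "finite Z" "finite S" "finite B" unfolding Z_def S_def B_def by auto
  have x0: "x 0 = r + (\<Sum>i\<in>Z. \<alpha> i)"
  proof -
    have "x 0 - (r + (\<Sum>i<k. \<alpha> i * tpow 0 (a i))) = 0" using lo unfolding little_o_def by simp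
    moreover have "(\<Sum>i<k. \<alpha> i * tpow 0 (a i)) = (\<Sum>i\<in>Z. \<alpha> i)"
      unfolding Z_def by (rule sum.mono_neutral_cong_right) (auto simp: tpow_def)
    ultimately show ?thesis by simp
  qed
  have split: "(\<Sum>i<k. \<alpha> i * tpow t (a i))
      = (\<Sum>i\<in>Z. \<alpha> i) + (\<Sum>i\<in>S. \<alpha> i * t powr a i) + (\<Sum>i\<in>B. \<alpha> i * t powr a i)" for t
  proof -
    have "{..<k} = Z \<union> S \<union> B" using a unfolding Z_def S_def B_def by force
    moreover have "Z \<inter> S = {}" "(Z \<union> S) \<inter> B = {}" unfolding Z_def S_def B_def by auto
    ultimately have "(\<Sum>i<k. \<alpha> i * tpow t (a i)) = (\<Sum>i\<in>Z. \<alpha> i * tpow t (a i))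
        + (\<Sum>i\<in>S. \<alpha> i * tpow t (a i)) + (\<Sum>i\<in>B. \<alpha> i * tpow t (a i))"
      using fin by (simp add: sum.union_disjoint)
    then show ?thesis unfolding Z_def S_def B_def by (simp add: tpow_def)
  qed
  have "little_o (\<lambda>t. \<Sum>i\<in>B. \<alpha> i * t powr a i)"
    by (rule little_o_sum[OF fin(3)]) (auto simp: B_def intro: little_o_powr)
  from little_o_add[OF lo this] have "fsim x (\<lambda>t. x 0 + (\<Sum>i\<in>S. \<alpha> i * t powr a i))"
    unfolding fsim_def x0 split by (rule little_o_cong) (simp add: algebra_simps)
  moreover have "\<forall>i\<in>S. 0 < a i \<and> a i \<le> 1" unfolding S_def by auto
  ultimately show ?thesis using fin(2) by blast
qed

lemma sum_powr_collect_exponents: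
  fixes \<alpha> a :: "nat \<Rightarrow> real"
  assumes S: "finite S"
  shows "\<exists>L. sorted_wrt (<) L \<and> set L \<subseteq> a ` S \<and> (\<forall>e\<in>set L. (\<Sum>i\<in>{i\<in>S. a i = e}. \<alpha> i) \<noteq> 0) \<and>
    (\<forall>t. (\<Sum>i\<in>S. \<alpha> i * t powr a i) = (\<Sum>e\<leftarrow>L. (\<Sum>i\<in>{i\<in>S. a i = e}. \<alpha> i) * t powr e))"
proof -
  define \<gamma> where "\<gamma> = (\<lambda>e. \<Sum>i\<in>{i\<in>S. a i = e}. \<alpha> i)"
  define L where "L = sorted_list_of_set {e\<in>a ` S. \<gamma> e \<noteq> 0}"
  have setL: "set L = {e\<in>a ` S. \<gamma> e \<noteq> 0}" "distinct L" unfolding L_def using S by auto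
  have "(\<Sum>i\<in>S. \<alpha> i * t powr a i) = (\<Sum>e\<leftarrow>L. \<gamma> e * t powr e)" for t
  proof -
    have "(\<Sum>i\<in>S. \<alpha> i * t powr a i) = (\<Sum>e\<in>a ` S. \<Sum>i\<in>{i\<in>S. a i = e}. \<alpha> i * t powr a i)"
      by (rule sum.image_gen[OF S])
    also have "\<dots> = (\<Sum>e\<in>a ` S. \<gamma> e * t powr e)"
      unfolding \<gamma>_def by (simp add: sum_distrib_right)
    also have "\<dots> = (\<Sum>e\<in>{e\<in>a ` S. \<gamma> e \<noteq> 0}. \<gamma> e * t powr e)"
      by (rule sum.mono_neutral_right) (use S in auto)
    also have "\<dots> = (\<Sum>e\<leftarrow>L. \<gamma> e * t powr e)"
      using sum_list_distinct_conv_sum_set[OF setL(2), of "\<lambda>e. \<gamma> e * t powr e"] setL(1) by simp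
    finally show ?thesis .
  qed
  moreover have "sorted_wrt (<) L" unfolding L_def by (rule strict_sorted_list_of_set)
  ultimately show ?thesis using setL(1) unfolding \<gamma>_def by blast
qed

lemma fdecomp_exists: "\<exists>N \<alpha> a. fdecomp u N \<alpha> a"
proof -
  obtain S :: "nat set" and \<alpha> a where S: "finite S" "\<forall>i\<in>S. 0 < a i \<and> a i \<le> 1"
    and x: "fsim (frep u) (\<lambda>t. frep u 0 + (\<Sum>i\<in>S. \<alpha> i * t powr a i))"
    using Ro_fsim_low_powr_sum[OF frep_Ro[of u]] by blast
  define \<gamma> where "\<gamma> = (\<lambda>e. \<Sum>i\<in>{i\<in>S. a i = e}. \<alpha> i)"
  have "\<exists>L. sorted_wrt (<) L \<and> set L \<subseteq> a ` S \<and> (\<forall>e\<in>set L. \<gamma> e \<noteq> 0) \<and>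
      (\<forall>t. (\<Sum>i\<in>S. \<alpha> i * t powr a i) = (\<Sum>e\<leftarrow>L. \<gamma> e * t powr e))"
    unfolding \<gamma>_def by (rule sum_powr_collect_exponents[OF S(1)])
  then obtain L where L: "sorted_wrt (<) L \<and> set L \<subseteq> a ` S \<and> (\<forall>e\<in>set L. \<gamma> e \<noteq> 0) \<and>
      (\<forall>t. (\<Sum>i\<in>S. \<alpha> i * t powr a i) = (\<Sum>e\<leftarrow>L. \<gamma> e * t powr e))"
    by (rule exE)
  define N where "N = length L"
  define \<alpha>' where "\<alpha>' = (\<lambda>j. \<gamma> (L ! j))"
  define a' where "a' = (\<lambda>j. 1 / (L ! j))"
  \<comment> \<open>The decomposition uses dt_a = t^(1/a), so the exponents in (0, 1] are inverted.\<close>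
  have Lj: "0 < L ! j \<and> L ! j \<le> 1 \<and> \<gamma> (L ! j) \<noteq> 0" if "j < N" for j
  proof -
    have "L ! j \<in> set L" using that unfolding N_def by simp
    then have "L ! j \<in> a ` S" "\<gamma> (L ! j) \<noteq> 0" using L by auto
    then show ?thesis using S(2) by auto
  qed
  have "(\<Sum>i\<in>S. \<alpha> i * t powr a i) = (\<Sum>j<N. \<alpha>' j * t powr (1 / a' j))" for t
  proof -
    have "(\<Sum>i\<in>S. \<alpha> i * t powr a i) = (\<Sum>e\<leftarrow>L. \<gamma> e * t powr e)" using L by blast
    also have "\<dots> = (\<Sum>j<N. \<alpha>' j * t powr (1 / a' j))"
      unfolding N_def \<alpha>'_def a'_def by (simp add: sum_list_sum_nth atLeast0LessThan)
    finally show ?thesis .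
  qed
  then have "fsim (frep u) (\<lambda>t. st u + (\<Sum>j<N. \<alpha>' j * t powr (1 / a' j)))"
    using x by (simp add: st_def)
  then have "fclass (frep u) = fclass (\<lambda>t. st u + (\<Sum>j<N. \<alpha>' j * t powr (1 / a' j)))"
    by (rule fclass_eqI)
  then have u: "u = fclass (\<lambda>t. st u + (\<Sum>j<N. \<alpha>' j * t powr (1 / a' j)))"
    by (simp only: fclass_frep)
  have "fdecomp u N \<alpha>' a'"
    unfolding fdecomp_def
  proof (intro conjI allI impI u)
    fix i assume "i < N"
    then show "\<alpha>' i \<noteq> 0" "1 \<le> a' i" using Lj unfolding \<alpha>'_def a'_def by auto
  next
    fix i j assume ij: "i < j \<and> j < N"
    then have "L ! i < L ! j" using L sorted_wrt_nth_less[of "(<)" L] unfolding N_def by blast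
    moreover have "0 < L ! i" using Lj ij by auto
    ultimately show "a' j < a' i" unfolding a'_def by (simp add: frac_less2)
  qed
  then show ?thesis by blast
qed

lemma omega_fdecomp: "\<exists>N \<alpha> a. fdecomp u N \<alpha> a \<and> omega u = (if N = 0 then 0 else a 0)"
proof -
  let ?P = "\<lambda>w. \<exists>N \<alpha> a. fdecomp u N \<alpha> a \<and> w = (if N = 0 then 0 else a 0)"
  have "\<exists>!w. ?P w"
  proof (rule ex_ex1I)
    show "\<exists>w. ?P w" using fdecomp_exists by blast
  next
    fix w1 w2 assume "?P w1" "?P w2"
    obtain N1 \<alpha>1 a1 where d1: "fdecomp u N1 \<alpha>1 a1" "w1 = (if N1 = 0 then 0 else a1 0)"
      using \<open>?P w1\<close> by blast
    obtain N2 \<alpha>2 a2 where d2: "fdecomp u N2 \<alpha>2 a2" "w2 = (if N2 = 0 then 0 else a2 0)"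
      using \<open>?P w2\<close> by blast
    note d = d1 d2
    show "w1 = w2"
    proof (cases "N1 = 0")
      case True
      then show ?thesis using d fdecomp_leading_exp_minimal[OF d(3) d(1)] by (cases "N2 = 0") auto
    next
      case False
      show ?thesis
      proof (cases "N2 = 0")
        case True then show ?thesis using fdecomp_leading_exp_minimal[OF d(1) d(3)] False by auto
      next
        case False2: False
        show ?thesis
          using fdecomp_leading_exp_minimal[OF d(1) d(3)] fdecomp_leading_exp_minimal[OF d(3) d(1)] False False2 d(2,4)
          by (cases "a1 0" "a2 0" rule: linorder_cases) auto
      qed
    qed
  qed
  then have "?P (THE w. ?P w)" by (rule theI')
  then show ?thesis unfolding omega_def by simp
qed

lemma omega_nonneg: "omega u \<ge> 0"
proof -
  obtain N \<alpha> a where "fdecomp u N \<alpha> a" "omega u = (if N = 0 then 0 else a 0)"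
    using omega_fdecomp by blast
  then show ?thesis unfolding fdecomp_def by (cases "N = 0") force+
qed

lemma omega_less_1_imp_standard:
  assumes "omega u < 1" shows "u = fclass (\<lambda>t. st u)"
proof -
  obtain N \<alpha> a where d: "fdecomp u N \<alpha> a" "omega u = (if N = 0 then 0 else a 0)"
    using omega_fdecomp by blast
  then have "N = 0" using assms unfolding fdecomp_def by (cases "N = 0") force+
  then show ?thesis using d unfolding fdecomp_def by simp
qed

lemma fdiff_standard:
  assumes "omega (fdiff u v) < 1"
  shows "fsim (\<lambda>t. frep u t - frep v t) (\<lambda>t. st (fdiff u v))"
proof -
  have "fclass (\<lambda>t. frep u t - frep v t) = fclass (\<lambda>t. st (fdiff u v))"
    using omega_less_1_imp_standard[OF assms] unfolding fdiff_def by simp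
  then show ?thesis by (rule fclass_eqD[OF Ro_diff[OF frep_Ro frep_Ro] Ro_const])
qed

section \<open>The \<omega>-topology\<close>

lemma istopology_omega_open: "istopology (omega_open n)"
  unfolding istopology_def
proof (intro conjI allI impI)
  fix S T assume S: "omega_open n S" and T: "omega_open n T"
  show "omega_open n (S \<inter> T)"
    unfolding omega_open_def
  proof (intro conjI ballI)
    show "S \<inter> T \<subseteq> fvec n" using S by (auto simp: omega_open_def)
    fix x assume "x \<in> S \<inter> T"
    then obtain e1 e2 where e: "e1 > 0" "\<forall>y\<in>fvec n. d_omega n x y < e1 \<longrightarrow> y \<in> S"
      "e2 > 0" "\<forall>y\<in>fvec n. d_omega n x y < e2 \<longrightarrow> y \<in> T"
      using S T unfolding omega_open_def by blast
    show "\<exists>e>0. \<forall>y\<in>fvec n. d_omega n x y < e \<longrightarrow> y \<in> S \<inter> T"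
      using e by (intro exI[of _ "min e1 e2"]) auto
  qed
next
  fix K assume K: "\<forall>U\<in>K. omega_open n U"
  show "omega_open n (\<Union>K)"
    unfolding omega_open_def
  proof (intro conjI ballI)
    show "\<Union>K \<subseteq> fvec n" using K by (auto simp: omega_open_def)
    fix x assume "x \<in> \<Union>K"
    then obtain U where U: "U \<in> K" "x \<in> U" by blast
    then obtain e where "e > 0" "\<forall>y\<in>fvec n. d_omega n x y < e \<longrightarrow> y \<in> U"
      using K unfolding omega_open_def by blast
    then show "\<exists>e>0. \<forall>y\<in>fvec n. d_omega n x y < e \<longrightarrow> y \<in> \<Union>K" using U by blast
  qed
qed

lemma openin_omega_topology: "openin (omega_topology n) = omega_open n"
  unfolding omega_topology_def by (rule topology_inverse'[OF istopology_omega_open])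

lemma d_omega_bounds:
  assumes "i < n"
  shows "omega (fdiff (x i) (y i)) \<le> d_omega n x y" "\<bar>st (x i) - st (y i)\<bar> \<le> d_omega n x y"
proof -
  have o0: "\<And>j. omega (fdiff (x j) (y j)) \<ge> 0" by (rule omega_nonneg)
  have s0: "sqrt (\<Sum>i<n. (st (x i) - st (y i))\<^sup>2) \<ge> 0" by (simp add: sum_nonneg)
  have S0: "(\<Sum>i<n. omega (fdiff (x i) (y i))) \<ge> 0" using o0 by (simp add: sum_nonneg)
  have "omega (fdiff (x i) (y i)) \<le> (\<Sum>i<n. omega (fdiff (x i) (y i)))"
    by (rule member_le_sum) (use assms o0 in auto)
  then show "omega (fdiff (x i) (y i)) \<le> d_omega n x y" unfolding d_omega_def using s0 by linarith
  have "(st (x i) - st (y i))\<^sup>2 \<le> (\<Sum>i<n. (st (x i) - st (y i))\<^sup>2)"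
    by (rule member_le_sum) (use assms in auto)
  then have "sqrt ((st (x i) - st (y i))\<^sup>2) \<le> sqrt (\<Sum>i<n. (st (x i) - st (y i))\<^sup>2)"
    by (rule real_sqrt_le_mono)
  then show "\<bar>st (x i) - st (y i)\<bar> \<le> d_omega n x y" unfolding d_omega_def using S0 by simp
qed

text \<open>An \<omega>-distance below 1 forces the difference of two points to be standard, so these
  neighbourhoods of x, made of standard translates of x, are \<omega>-open.\<close>
definition standard_nbhd :: "(nat \<Rightarrow> fermat) \<Rightarrow> nat \<Rightarrow> real \<Rightarrow> (nat \<Rightarrow> fermat) set" where
  "standard_nbhd x n e = {y \<in> fvec n. (\<forall>i<n. \<exists>c. fsim (\<lambda>t. frep (y i) t - frep (x i) t) (\<lambda>t. c)) \<and>
      (\<forall>i<n. \<bar>st (y i) - st (x i)\<bar> < e)}"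

lemma omega_open_standard_nbhd: assumes "e > 0" shows "omega_open n (standard_nbhd x n e)"
  unfolding omega_open_def
proof (intro conjI ballI)
  show "standard_nbhd x n e \<subseteq> fvec n" unfolding standard_nbhd_def by auto
  fix z assume z: "z \<in> standard_nbhd x n e"
  define Mx where "Mx = Max (insert 0 ((\<lambda>i. \<bar>st (z i) - st (x i)\<bar>) ` {..<n}))"
  have Mx: "Mx < e" "\<And>i. i < n \<Longrightarrow> \<bar>st (z i) - st (x i)\<bar> \<le> Mx"
    using z assms unfolding Mx_def standard_nbhd_def by auto
  show "\<exists>\<epsilon>>0. \<forall>y\<in>fvec n. d_omega n z y < \<epsilon> \<longrightarrow> y \<in> standard_nbhd x n e"
  proof (intro exI[of _ "min 1 (e - Mx)"] conjI ballI impI)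
    show "min 1 (e - Mx) > 0" using Mx by simp
    fix y assume y: "y \<in> fvec n" "d_omega n z y < min 1 (e - Mx)"
    have rel: "\<exists>c. fsim (\<lambda>t. frep (y i) t - frep (x i) t) (\<lambda>t. c)" if i: "i < n" for i
    proof -
      have "omega (fdiff (z i) (y i)) < 1" using d_omega_bounds(1)[OF i, of z y] y(2) by linarith
      then have f1: "fsim (\<lambda>t. frep (z i) t - frep (y i) t) (\<lambda>t. st (fdiff (z i) (y i)))" by (rule fdiff_standard)
      obtain c where f2: "fsim (\<lambda>t. frep (z i) t - frep (x i) t) (\<lambda>t. c)" using z i unfolding standard_nbhd_def by blast
      have "little_o (\<lambda>t. (frep (z i) t - frep (x i) t - c) - (frep (z i) t - frep (y i) t - st (fdiff (z i) (y i))))"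
        using f1 f2 unfolding fsim_def by (rule little_o_diff[rotated])
      then have "fsim (\<lambda>t. frep (y i) t - frep (x i) t) (\<lambda>t. c - st (fdiff (z i) (y i)))"
        unfolding fsim_def by (rule little_o_cong) (simp add: algebra_simps)
      then show ?thesis by blast
    qed
    have "\<bar>st (y i) - st (x i)\<bar> < e" if i: "i < n" for i
      using d_omega_bounds(2)[OF i, of z y] y(2) Mx(2)[OF i] by linarith
    then show "y \<in> standard_nbhd x n e" unfolding standard_nbhd_def using y(1) rel by blast
  qed
qed

lemma omega_closure_standard_translates:
  assumes x: "x \<in> subtopology (omega_topology n) A closure_of D" and xf: "x \<in> fvec n" and \<rho>: "\<rho> > 0"
  obtains Y r where "\<And>k. Y k \<in> D"
    and "\<And>k i. i < n \<Longrightarrow> fsim (frep (Y k i)) (\<lambda>t. frep (x i) t + r k i)"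
    and "\<And>k i. i < n \<Longrightarrow> \<bar>r k i\<bar> < \<rho>"
    and "\<And>i. i < n \<Longrightarrow> (\<lambda>k. r k i) \<longlonglongrightarrow> 0"
proof -
  have xA: "x \<in> A" using x unfolding in_closure_of by simp
  have "\<exists>y. y \<in> D \<and> y \<in> standard_nbhd x n (\<rho> / real (Suc k))" for k
  proof -
    have ek: "\<rho> / real (Suc k) > 0" using \<rho> by simp
    have "openin (subtopology (omega_topology n) A) (standard_nbhd x n (\<rho> / real (Suc k)) \<inter> A)"
      unfolding openin_subtopology openin_omega_topology using omega_open_standard_nbhd[OF ek] by blast
    moreover have "x \<in> standard_nbhd x n (\<rho> / real (Suc k))"
      using xf ek unfolding standard_nbhd_def by (auto simp: fsim_def little_o_zero intro!: exI[of _ 0])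
    ultimately show ?thesis using x xA unfolding in_closure_of by blast
  qed
  then obtain Y where Y: "\<And>k. Y k \<in> D" "\<And>k. Y k \<in> standard_nbhd x n (\<rho> / real (Suc k))"
    by metis
  define r where "r = (\<lambda>k i. st (Y k i) - st (x i))"
  have rb: "\<bar>r k i\<bar> < \<rho> / real (Suc k)" if "i < n" for k i
    using Y(2) that unfolding standard_nbhd_def r_def by blast
  show ?thesis
  proof (rule that[OF Y(1)])
    fix k i assume i: "i < n"
    obtain c where c: "fsim (\<lambda>t. frep (Y k i) t - frep (x i) t) (\<lambda>t. c)"
      using Y(2) i unfolding standard_nbhd_def by blast
    have "c = r k i" using fsim_at_0[OF c] unfolding r_def st_def by simp
    then show "fsim (frep (Y k i)) (\<lambda>t. frep (x i) t + r k i)"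
      using c unfolding fsim_def by (elim little_o_cong) (simp add: algebra_simps)
    have "\<rho> / real (Suc k) \<le> \<rho>" using \<rho> by (simp add: divide_le_eq)
    then show "\<bar>r k i\<bar> < \<rho>" using rb[OF i, of k] by linarith
  next
    fix i assume i: "i < n"
    have "(\<lambda>k. \<rho> / real (Suc k)) \<longlonglongrightarrow> 0"
      using LIMSEQ_Suc[OF lim_const_over_n[of \<rho>]] by simp
    then show "(\<lambda>k. r k i) \<longlonglongrightarrow> 0"
      by (rule Lim_null_comparison[rotated]) (use rb[OF i] in \<open>auto intro: always_eventually less_imp_le\<close>)
  qed
qed

section \<open>Boxes in R^d\<close>

lemma open_contains_box:
  fixes S :: "(nat \<Rightarrow> real) set"
  assumes "open S" "z \<in> S"
  shows "\<exists>\<rho>>0. \<forall>v. (\<forall>i<d. \<bar>v i - z i\<bar> < \<rho>) \<and> (\<forall>i\<ge>d. v i = z i) \<longrightarrow> v \<in> S"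
proof -
  from assms obtain U where U: "finite {i. U i \<noteq> UNIV}" "\<And>i. open (U i)" "z \<in> Pi\<^sub>E UNIV U" "Pi\<^sub>E UNIV U \<subseteq> S"
    unfolding open_fun_def openin_product_topology_alt by auto
  define J where "J = {i. U i \<noteq> UNIV}"
  have "\<forall>i\<in>J. \<exists>e>0. ball (z i) e \<subseteq> U i"
    using U(2,3) by (meson PiE_E UNIV_I open_contains_ball)
  then obtain e where e: "\<And>i. i\<in>J \<Longrightarrow> e i > 0 \<and> ball (z i) (e i) \<subseteq> U i" by metis
  define \<rho> where "\<rho> = Min (insert 1 (e ` J))"
  have fJ: "finite J" using U(1) J_def by simp
  have rpos: "\<rho> > 0" unfolding \<rho>_def using fJ e by (subst Min_gr_iff) auto
  have rle: "\<And>i. i \<in> J \<Longrightarrow> \<rho> \<le> e i" unfolding \<rho>_def using fJ by auto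
  show ?thesis
  proof (intro exI[of _ \<rho>] conjI allI impI rpos)
    fix v assume v: "(\<forall>i<d. \<bar>v i - z i\<bar> < \<rho>) \<and> (\<forall>i\<ge>d. v i = z i)"
    have "v \<in> Pi\<^sub>E UNIV U"
    proof (rule PiE_I)
      fix i
      show "v i \<in> U i"
      proof (cases "i \<in> J")
        case True
        show ?thesis
        proof (cases "i < d")
          case True
          then have "\<bar>v i - z i\<bar> < e i" using v rle \<open>i\<in>J\<close> by fastforce
          then show ?thesis using e[OF \<open>i\<in>J\<close>] by (auto simp: dist_real_def abs_minus_commute)
        next
          case False
          then show ?thesis using v U(3) by auto
        qed
      next
        case False then show ?thesis by (auto simp: J_def)
      qed
    qed auto
    then show "v \<in> S" using U(4) by auto
  qed
qed

lemma continuous_on_box: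
  fixes F :: "(nat \<Rightarrow> real) \<Rightarrow> real"
  assumes "continuous_on W F" "z \<in> W" "W \<subseteq> rvec d" "\<epsilon> > 0"
  shows "\<exists>\<rho>>0. \<forall>v\<in>W. (\<forall>i<d. \<bar>v i - z i\<bar> < \<rho>) \<longrightarrow> \<bar>F v - F z\<bar> < \<epsilon>"
proof -
  obtain B where B: "open B" "z \<in> B" "\<forall>y\<in>W. y \<in> B \<longrightarrow> F y \<in> ball (F z) \<epsilon>"
    using assms(1,2,4) unfolding continuous_on_topological
    by (metis centre_in_ball open_ball)
  obtain \<rho> where r: "\<rho> > 0" "\<forall>v. (\<forall>i<d. \<bar>v i - z i\<bar> < \<rho>) \<and> (\<forall>i\<ge>d. v i = z i) \<longrightarrow> v \<in> B"
    using open_contains_box[OF B(1,2)] by blast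
  show ?thesis
  proof (intro exI[of _ \<rho>] conjI ballI impI r(1))
    fix v assume v: "v \<in> W" "\<forall>i<d. \<bar>v i - z i\<bar> < \<rho>"
    have "v \<in> rvec d" "z \<in> rvec d" using v(1) assms(2,3) by auto
    then have "\<forall>i\<ge>d. v i = z i" by (simp add: rvec_def)
    then have "v \<in> B" using r(2) v(2) by blast
    then show "\<bar>F v - F z\<bar> < \<epsilon>" using B(3) v(1) by (auto simp: dist_real_def abs_minus_commute)
  qed
qed

definition box_open :: "nat \<Rightarrow> (nat \<Rightarrow> real) set \<Rightarrow> bool" where
  "box_open d W \<longleftrightarrow> W \<subseteq> rvec d \<and> (\<forall>z\<in>W. \<exists>\<rho>>0. \<forall>v\<in>rvec d. (\<forall>i<d. \<bar>v i - z i\<bar> < \<rho>) \<longrightarrow> v \<in> W)"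

lemma ropen_imp_box_open:
  assumes "ropen d V" shows "box_open d V"
  unfolding box_open_def
proof (intro conjI ballI)
  show "V \<subseteq> rvec d" using assms by (simp add: ropen_def)
  fix z assume z: "z \<in> V"
  obtain T where T: "open T" "V = rvec d \<inter> T" using assms unfolding ropen_def openin_open by auto
  obtain \<rho> where r: "\<rho> > 0" "\<forall>v. (\<forall>i<d. \<bar>v i - z i\<bar> < \<rho>) \<and> (\<forall>i\<ge>d. v i = z i) \<longrightarrow> v \<in> T"
    using open_contains_box[OF T(1), of z] z T(2) by blast
  have zr: "z \<in> rvec d" using z T(2) by auto
  show "\<exists>\<rho>>0. \<forall>v\<in>rvec d. (\<forall>i<d. \<bar>v i - z i\<bar> < \<rho>) \<longrightarrow> v \<in> V"
  proof (intro exI[of _ \<rho>] conjI ballI impI r(1))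
    fix v assume "v \<in> rvec d" "\<forall>i<d. \<bar>v i - z i\<bar> < \<rho>"
    moreover then have "\<forall>i\<ge>d. v i = z i" using zr by (auto simp: rvec_def)
    ultimately show "v \<in> V" using r(2) T(2) by blast
  qed
qed

lemma box_open_rprod:
  assumes "ropen pd P" "ropen n V"
  shows "box_open (pd + n) (rprod pd n P V)"
  unfolding box_open_def
proof (intro conjI ballI)
  have P: "box_open pd P" and V: "box_open n V" using assms ropen_imp_box_open by auto
  show "rprod pd n P V \<subseteq> rvec (pd + n)"
    using P V unfolding box_open_def rprod_def vconcat_def rvec_def by auto
  fix z assume "z \<in> rprod pd n P V"
  then obtain p y where z: "z = vconcat pd p y" "p \<in> P" "y \<in> V" unfolding rprod_def by auto
  obtain r1 where r1: "r1 > 0" "\<forall>v\<in>rvec pd. (\<forall>i<pd. \<bar>v i - p i\<bar> < r1) \<longrightarrow> v \<in> P"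
    using P z(2) unfolding box_open_def by blast
  obtain r2 where r2: "r2 > 0" "\<forall>v\<in>rvec n. (\<forall>i<n. \<bar>v i - y i\<bar> < r2) \<longrightarrow> v \<in> V"
    using V z(3) unfolding box_open_def by blast
  show "\<exists>\<rho>>0. \<forall>v\<in>rvec (pd+n). (\<forall>i<pd+n. \<bar>v i - z i\<bar> < \<rho>) \<longrightarrow> v \<in> rprod pd n P V"
  proof (intro exI[of _ "min r1 r2"] conjI ballI impI)
    show "min r1 r2 > 0" using r1 r2 by simp
    fix v assume v: "v \<in> rvec (pd+n)" "\<forall>i<pd+n. \<bar>v i - z i\<bar> < min r1 r2"
    define p' where "p' = (\<lambda>i. if i < pd then v i else 0)"
    define y' where "y' = (\<lambda>j. v (j + pd))"
    have "p' \<in> rvec pd" unfolding p'_def rvec_def by auto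
    moreover have "\<forall>i<pd. \<bar>p' i - p i\<bar> < r1"
    proof (intro allI impI)
      fix i assume i: "i < pd"
      then have "\<bar>v i - z i\<bar> < min r1 r2" using v(2) by simp
      then show "\<bar>p' i - p i\<bar> < r1" using i unfolding p'_def z(1) vconcat_def by simp
    qed
    ultimately have pP: "p' \<in> P" using r1 by blast
    have "y' \<in> rvec n" using v(1) unfolding y'_def rvec_def by auto
    moreover have "\<forall>j<n. \<bar>y' j - y j\<bar> < r2"
    proof (intro allI impI)
      fix j assume "j < n"
      then have "\<bar>v (j+pd) - z (j+pd)\<bar> < min r1 r2" using v(2) by auto
      then show "\<bar>y' j - y j\<bar> < r2" unfolding y'_def z(1) vconcat_def by auto
    qed
    ultimately have yV: "y' \<in> V" using r2 by blast
    have "v = vconcat pd p' y'" unfolding vconcat_def p'_def y'_def by auto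
    then show "v \<in> rprod pd n P V" using pP yV unfolding rprod_def by auto
  qed
qed

lemma continuous_on_tendsto_translates:
  fixes F :: "(nat \<Rightarrow> real) \<Rightarrow> real"
  assumes F: "continuous_on W F" and z: "z \<in> W" and Wr: "W \<subseteq> rvec d"
    and inW: "\<And>k. (\<lambda>i. z i + R k i) \<in> W" and R: "\<And>i. i < d \<Longrightarrow> (\<lambda>k. R k i) \<longlonglongrightarrow> 0"
  shows "(\<lambda>k. F (\<lambda>i. z i + R k i)) \<longlonglongrightarrow> F z"
  unfolding tendsto_iff
proof (intro allI impI)
  fix \<epsilon> :: real assume \<epsilon>: "\<epsilon> > 0"
  obtain \<rho> where \<rho>: "\<rho> > 0" "\<forall>v\<in>W. (\<forall>i<d. \<bar>v i - z i\<bar> < \<rho>) \<longrightarrow> \<bar>F v - F z\<bar> < \<epsilon>"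
    using continuous_on_box[OF F z Wr \<epsilon>] by blast
  have "\<forall>i\<in>{..<d}. eventually (\<lambda>k. \<bar>R k i\<bar> < \<rho>) sequentially"
  proof
    fix i assume "i \<in> {..<d}"
    from tendstoD[OF R \<rho>(1)] this show "eventually (\<lambda>k. \<bar>R k i\<bar> < \<rho>) sequentially" by simp
  qed
  then have "eventually (\<lambda>k. \<forall>i\<in>{..<d}. \<bar>R k i\<bar> < \<rho>) sequentially"
    by (rule eventually_ball_finite[OF finite_lessThan])
  then show "eventually (\<lambda>k. dist (F (\<lambda>i. z i + R k i)) (F z) < \<epsilon>) sequentially"
    by (rule eventually_mono) (use \<rho>(2) inW in \<open>auto simp: dist_real_def\<close>)
qed

section \<open>Taylor expansion along paths in Ro\<close>

lemma MVT_between: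
  fixes f f' :: "real \<Rightarrow> real"
  assumes "\<And>x. min a b \<le> x \<Longrightarrow> x \<le> max a b \<Longrightarrow> DERIV f x :> f' x"
  shows "\<exists>\<xi>. min a b \<le> \<xi> \<and> \<xi> \<le> max a b \<and> f b - f a = (b - a) * f' \<xi>"
proof (cases a b rule: linorder_cases)
  case less
  then obtain z where "a < z" "z < b" "f b - f a = (b - a) * f' z"
    using MVT2[of a b f f'] assms by auto
  then show ?thesis using less by (intro exI[of _ z]) auto
next
  case equal then show ?thesis by (intro exI[of _ a]) auto
next
  case greater
  then obtain z where "b < z" "z < a" "f a - f b = (a - b) * f' z"
    using MVT2[of b a f f'] assms by auto
  then show ?thesis using greater by (intro exI[of _ z]) (auto simp: algebra_simps)
qed

lemma DERIV_partial:
  assumes "\<forall>x\<in>W. (\<lambda>s. F (x(i := s))) differentiable (at (x i))" "x(i := s) \<in> W"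
  shows "DERIV (\<lambda>s. F (x(i := s))) s :> partial i F (x(i := s))"
proof -
  have "(\<lambda>s'. F ((x(i := s))(i := s'))) differentiable (at ((x(i := s)) i))"
    using assms by blast
  then have "DERIV (\<lambda>s'. F ((x(i := s))(i := s'))) s :> deriv (\<lambda>s'. F ((x(i := s))(i := s'))) s"
    using DERIV_deriv_iff_real_differentiable by force
  then show ?thesis unfolding partial_def by simp
qed

definition stair :: "(nat \<Rightarrow> real) \<Rightarrow> (nat \<Rightarrow> real) \<Rightarrow> nat \<Rightarrow> nat \<Rightarrow> real" where
  "stair u v k = (\<lambda>i. if i < k then u i + v i else u i)"

lemma stair_telescope:
  fixes F :: "(nat \<Rightarrow> real) \<Rightarrow> real"
  assumes v: "v \<in> rvec d"
    and dif: "\<forall>i<d. \<forall>x\<in>W. (\<lambda>s. F (x(i := s))) differentiable (at (x i))"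
    and seg: "\<And>k \<sigma>. k < d \<Longrightarrow> min (u k) (u k + v k) \<le> \<sigma> \<Longrightarrow> \<sigma> \<le> max (u k) (u k + v k) \<Longrightarrow>
      (stair u v k)(k := \<sigma>) \<in> W"
  obtains \<xi> where "\<And>k. k < d \<Longrightarrow> min (u k) (u k + v k) \<le> \<xi> k \<and> \<xi> k \<le> max (u k) (u k + v k)"
    and "F (\<lambda>j. u j + v j) - F u = (\<Sum>k<d. v k * partial k F ((stair u v k)(k := \<xi> k)))"
proof -
  have step: "(stair u v k)(k := u k + v k) = stair u v (Suc k)" "(stair u v k)(k := u k) = stair u v k" for k
    unfolding stair_def by auto
  have "\<exists>\<xi>. min (u k) (u k + v k) \<le> \<xi> \<and> \<xi> \<le> max (u k) (u k + v k) \<and>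
      F (stair u v (Suc k)) - F (stair u v k) = v k * partial k F ((stair u v k)(k := \<xi>))" if k: "k < d" for k
  proof -
    have "\<exists>\<xi>. min (u k) (u k + v k) \<le> \<xi> \<and> \<xi> \<le> max (u k) (u k + v k) \<and>
        F ((stair u v k)(k := u k + v k)) - F ((stair u v k)(k := u k))
          = (u k + v k - u k) * partial k F ((stair u v k)(k := \<xi>))"
    proof (rule MVT_between[where f="\<lambda>\<sigma>. F ((stair u v k)(k := \<sigma>))"])
      fix \<sigma> assume \<sigma>: "min (u k) (u k + v k) \<le> \<sigma>" "\<sigma> \<le> max (u k) (u k + v k)"
      have "\<forall>x\<in>W. (\<lambda>s. F (x(k := s))) differentiable (at (x k))" using dif k by blast
      then show "DERIV (\<lambda>\<sigma>. F ((stair u v k)(k := \<sigma>))) \<sigma> :> partial k F ((stair u v k)(k := \<sigma>))"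
        by (rule DERIV_partial) (rule seg[OF k \<sigma>])
    qed
    then show ?thesis by (simp only: step add_diff_cancel_left')
  qed
  then have "\<forall>k\<in>{..<d}. \<exists>\<xi>. min (u k) (u k + v k) \<le> \<xi> \<and> \<xi> \<le> max (u k) (u k + v k) \<and>
      F (stair u v (Suc k)) - F (stair u v k) = v k * partial k F ((stair u v k)(k := \<xi>))"
    by blast
  from bchoice[OF this] obtain \<xi> where \<xi>: "\<forall>k\<in>{..<d}. min (u k) (u k + v k) \<le> \<xi> k \<and> \<xi> k \<le> max (u k) (u k + v k) \<and>
      F (stair u v (Suc k)) - F (stair u v k) = v k * partial k F ((stair u v k)(k := \<xi> k))"
    by blast
  have "stair u v d = (\<lambda>j. u j + v j)" using v unfolding stair_def rvec_def by auto
  moreover have "stair u v 0 = u" unfolding stair_def by simp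
  ultimately have "F (\<lambda>j. u j + v j) - F u = (\<Sum>k<d. F (stair u v (Suc k)) - F (stair u v k))"
    using sum_lessThan_telescope[of "\<lambda>k. F (stair u v k)" d] by simp
  also have "\<dots> = (\<Sum>k<d. v k * partial k F ((stair u v k)(k := \<xi> k)))"
    using \<xi> by (intro sum.cong) auto
  finally show ?thesis using that \<xi> by blast
qed

lemma DERIV_along_line_0:
  fixes F :: "(nat \<Rightarrow> real) \<Rightarrow> real"
  assumes W: "box_open d W" and u: "u \<in> W" and v: "v \<in> rvec d"
    and dif: "\<forall>i<d. \<forall>x\<in>W. (\<lambda>s. F (x(i := s))) differentiable (at (x i))"
    and cont: "\<forall>i<d. continuous_on W (partial i F)"
  shows "DERIV (\<lambda>h. F (\<lambda>j. u j + h * v j)) 0 :> (\<Sum>i<d. partial i F u * v i)"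
  unfolding DERIV_def LIM_eq
proof (intro allI impI)
  fix r :: real assume r: "r > 0"
  have Wr: "W \<subseteq> rvec d" using W by (simp add: box_open_def)
  have ur: "u \<in> rvec d" using u Wr by auto
  obtain \<rho>W where \<rho>W: "\<rho>W > 0" "\<forall>x\<in>rvec d. (\<forall>i<d. \<bar>x i - u i\<bar> < \<rho>W) \<longrightarrow> x \<in> W"
    using W u unfolding box_open_def by blast
  define V where "V = (\<Sum>i<d. \<bar>v i\<bar>) + 1"
  have Vi: "\<bar>v i\<bar> \<le> (\<Sum>i<d. \<bar>v i\<bar>)" if "i < d" for i
    by (rule member_le_sum) (use that in auto)
  have V: "V > 0" "\<And>i. i < d \<Longrightarrow> \<bar>v i\<bar> < V" "(\<Sum>i<d. \<bar>v i\<bar>) < V"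
    unfolding V_def using Vi sum_nonneg[of "{..<d}" "\<lambda>i. \<bar>v i\<bar>"] by force+
  have "\<forall>i. \<exists>\<rho>. i < d \<longrightarrow> \<rho> > 0 \<and>
      (\<forall>x\<in>W. (\<forall>j<d. \<bar>x j - u j\<bar> < \<rho>) \<longrightarrow> \<bar>partial i F x - partial i F u\<bar> < r / V)"
    using continuous_on_box[OF _ u Wr] cont r V(1) by simp
  then obtain \<rho>c where \<rho>c: "\<And>i. i < d \<Longrightarrow> \<rho>c i > 0 \<and>
      (\<forall>x\<in>W. (\<forall>j<d. \<bar>x j - u j\<bar> < \<rho>c i) \<longrightarrow> \<bar>partial i F x - partial i F u\<bar> < r / V)"
    by (metis (no_types))
  define \<rho> where "\<rho> = Min (insert \<rho>W (\<rho>c ` {..<d}))"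
  have \<rho>: "\<rho> > 0" "\<rho> \<le> \<rho>W" "\<And>i. i < d \<Longrightarrow> \<rho> \<le> \<rho>c i"
    unfolding \<rho>_def using \<rho>W \<rho>c by (auto simp: Min_gr_iff)
  show "\<exists>s>0. \<forall>h. h \<noteq> 0 \<and> norm (h - 0) < s \<longrightarrow>
      norm ((F (\<lambda>j. u j + (0 + h) * v j) - F (\<lambda>j. u j + 0 * v j)) / h - (\<Sum>i<d. partial i F u * v i)) < r"
  proof (intro exI[of _ "\<rho> / V"] conjI allI impI)
    show "\<rho> / V > 0" using \<rho> V by simp
    fix h :: real assume h: "h \<noteq> 0 \<and> norm (h - 0) < \<rho> / V"
    have hv: "\<bar>h * v i\<bar> < \<rho>" if "i < d" for i
    proof -
      have "\<bar>h * v i\<bar> \<le> \<bar>h\<bar> * V" using V(2)[OF that] by (simp add: abs_mult mult_left_mono)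
      also have "\<dots> < \<rho>" using h V(1) by (simp add: pos_less_divide_eq)
      finally show ?thesis .
    qed
    have near: "(stair u (\<lambda>j. h * v j) k)(k := \<sigma>) \<in> W \<and> (\<forall>j<d. \<bar>((stair u (\<lambda>j. h * v j) k)(k := \<sigma>)) j - u j\<bar> < \<rho>)"
      if "k < d" "min (u k) (u k + h * v k) \<le> \<sigma>" "\<sigma> \<le> max (u k) (u k + h * v k)" for k \<sigma>
    proof -
      have "\<bar>\<sigma> - u k\<bar> \<le> \<bar>h * v k\<bar>" using that(2,3) by (auto simp: min_def max_def split: if_splits)
      then have "\<bar>\<sigma> - u k\<bar> < \<rho>" using hv[OF that(1)] by linarith
      then have close: "\<forall>j<d. \<bar>((stair u (\<lambda>j. h * v j) k)(k := \<sigma>)) j - u j\<bar> < \<rho>"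
        using hv \<rho>(1) by (auto simp: stair_def)
      moreover have "(stair u (\<lambda>j. h * v j) k)(k := \<sigma>) \<in> rvec d"
        using ur v that(1) unfolding rvec_def stair_def by auto
      ultimately show ?thesis using \<rho>W(2) \<rho>(2) by fastforce
    qed
    obtain \<xi> where \<xi>: "\<And>k. k < d \<Longrightarrow> min (u k) (u k + h * v k) \<le> \<xi> k \<and> \<xi> k \<le> max (u k) (u k + h * v k)"
      and tel: "F (\<lambda>j. u j + h * v j) - F u = (\<Sum>k<d. h * v k * partial k F ((stair u (\<lambda>j. h * v j) k)(k := \<xi> k)))"
    proof (rule stair_telescope[of "\<lambda>j. h * v j" d W F u])
      show "(\<lambda>j. h * v j) \<in> rvec d" using v by (simp add: rvec_def)
    qed (use dif near in blast)+
    have close: "\<bar>partial k F ((stair u (\<lambda>j. h * v j) k)(k := \<xi> k)) - partial k F u\<bar> < r / V" if k: "k < d" for k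
    proof -
      have "(stair u (\<lambda>j. h * v j) k)(k := \<xi> k) \<in> W"
        and "\<forall>j<d. \<bar>((stair u (\<lambda>j. h * v j) k)(k := \<xi> k)) j - u j\<bar> < \<rho>"
        using near k \<xi>[OF k] by blast+
      with \<rho>(3)[OF k] \<rho>c[OF k] show ?thesis by force
    qed
    have "(F (\<lambda>j. u j + h * v j) - F u) / h - (\<Sum>i<d. partial i F u * v i)
        = (\<Sum>k<d. v k * (partial k F ((stair u (\<lambda>j. h * v j) k)(k := \<xi> k)) - partial k F u))"
      using tel h by (simp add: sum_divide_distrib sum_subtractf algebra_simps)
    also have "\<bar>\<dots>\<bar> \<le> (\<Sum>k<d. \<bar>v k\<bar> * (r / V))"
    proof (rule order.trans[OF sum_abs sum_mono])
      fix k assume "k \<in> {..<d}"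
      then have "\<bar>v k\<bar> * \<bar>partial k F ((stair u (\<lambda>j. h * v j) k)(k := \<xi> k)) - partial k F u\<bar> \<le> \<bar>v k\<bar> * (r / V)"
        using close[of k] by (intro mult_left_mono) auto
      then show "\<bar>v k * (partial k F ((stair u (\<lambda>j. h * v j) k)(k := \<xi> k)) - partial k F u)\<bar> \<le> \<bar>v k\<bar> * (r / V)"
        by (simp add: abs_mult)
    qed
    also have "\<dots> = (\<Sum>k<d. \<bar>v k\<bar>) * (r / V)" by (rule sum_distrib_right[symmetric])
    also have "\<dots> < V * (r / V)" using V(1,3) r by (intro mult_strict_right_mono) auto
    also have "\<dots> = r" using V(1) by simp
    finally show "norm ((F (\<lambda>j. u j + (0 + h) * v j) - F (\<lambda>j. u j + 0 * v j)) / h - (\<Sum>i<d. partial i F u * v i)) < r"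
      by simp
  qed
qed

lemma DERIV_along_line:
  fixes F :: "(nat \<Rightarrow> real) \<Rightarrow> real"
  assumes W: "box_open d W" and u: "(\<lambda>j. u j + s * v j) \<in> W" and v: "v \<in> rvec d"
    and dif: "\<forall>i<d. \<forall>x\<in>W. (\<lambda>s. F (x(i := s))) differentiable (at (x i))"
    and cont: "\<forall>i<d. continuous_on W (partial i F)"
  shows "DERIV (\<lambda>h. F (\<lambda>j. u j + h * v j)) s :> (\<Sum>i<d. partial i F (\<lambda>j. u j + s * v j) * v i)"
proof -
  have "DERIV (\<lambda>h. F (\<lambda>j. (u j + s * v j) + h * v j)) 0 :> (\<Sum>i<d. partial i F (\<lambda>j. u j + s * v j) * v i)"
    by (rule DERIV_along_line_0[OF W u v dif cont])
  moreover have "(\<lambda>h. F (\<lambda>j. (u j + s * v j) + h * v j)) = (\<lambda>h. F (\<lambda>j. u j + (h + s) * v j))"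
    by (simp add: algebra_simps)
  ultimately show ?thesis using DERIV_shift[of "\<lambda>h. F (\<lambda>j. u j + h * v j)" _ 0 s] by simp
qed

definition index_lists :: "nat \<Rightarrow> nat \<Rightarrow> nat list set" where
  "index_lists d m = {is. set is \<subseteq> {..<d} \<and> length is = m}"

lemma finite_index_lists: "finite (index_lists d m)"
  unfolding index_lists_def by (rule finite_lists_length_eq) simp

lemma index_lists_0: "index_lists d 0 = {[]}"
  unfolding index_lists_def by auto

lemma index_lists_Suc: "index_lists d (Suc m) = (\<lambda>(i, is). i # is) ` ({..<d} \<times> index_lists d m)"
proof
  show "index_lists d (Suc m) \<subseteq> (\<lambda>(i, is). i # is) ` ({..<d} \<times> index_lists d m)"
  proof
    fix js assume "js \<in> index_lists d (Suc m)"
    then obtain i "is" where "js = i # is" "i < d" "is \<in> index_lists d m"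
      unfolding index_lists_def by (cases js) auto
    then show "js \<in> (\<lambda>(i, is). i # is) ` ({..<d} \<times> index_lists d m)" by force
  qed
qed (auto simp: index_lists_def)

lemma smooth_on_iter_partial:
  assumes "smooth_on d W G" "set is \<subseteq> {..<d}"
  shows "continuous_on W (iter_partial is G)"
    "\<forall>i<d. \<forall>x\<in>W. (\<lambda>s. iter_partial is G (x(i := s))) differentiable (at (x i))"
  using assms unfolding smooth_on_def by blast+

text \<open>The k-th derivative of \<sigma> \<mapsto> G (u + \<sigma> v).\<close>
definition line_deriv :: "nat \<Rightarrow> ((nat \<Rightarrow> real) \<Rightarrow> real) \<Rightarrow> (nat \<Rightarrow> real) \<Rightarrow> (nat \<Rightarrow> real) \<Rightarrow> nat \<Rightarrow> real \<Rightarrow> real" where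
  "line_deriv d G u v k \<sigma> = (\<Sum>is\<in>index_lists d k. iter_partial is G (\<lambda>j. u j + \<sigma> * v j) * prod_list (map v is))"

lemma DERIV_line_deriv:
  assumes sm: "smooth_on d W G" and W: "box_open d W" and v: "v \<in> rvec d"
    and pt: "(\<lambda>j. u j + \<sigma> * v j) \<in> W"
  shows "DERIV (line_deriv d G u v k) \<sigma> :> line_deriv d G u v (Suc k) \<sigma>"
proof -
  let ?p = "\<lambda>j. u j + \<sigma> * v j"
  have D: "DERIV (line_deriv d G u v k) \<sigma> :>
      (\<Sum>is\<in>index_lists d k. (\<Sum>i<d. partial i (iter_partial is G) ?p * v i) * prod_list (map v is))"
    unfolding line_deriv_def
  proof (rule DERIV_sum, rule DERIV_cmult_right)
    fix "is" assume "is \<in> index_lists d k"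
    then have sis: "set is \<subseteq> {..<d}" by (simp add: index_lists_def)
    have c: "\<forall>i<d. continuous_on W (partial i (iter_partial is G))"
    proof (intro allI impI)
      fix i assume "i < d"
      then have "set (i # is) \<subseteq> {..<d}" using sis by auto
      then show "continuous_on W (partial i (iter_partial is G))"
        using smooth_on_iter_partial(1)[OF sm] by fastforce
    qed
    show "DERIV (\<lambda>\<sigma>. iter_partial is G (\<lambda>j. u j + \<sigma> * v j)) \<sigma> :> (\<Sum>i<d. partial i (iter_partial is G) ?p * v i)"
      by (rule DERIV_along_line[OF W pt v smooth_on_iter_partial(2)[OF sm sis] c])
  qed
  have "(\<Sum>is\<in>index_lists d k. (\<Sum>i<d. partial i (iter_partial is G) ?p * v i) * prod_list (map v is))
      = (\<Sum>is\<in>index_lists d k. \<Sum>i<d. iter_partial (i # is) G ?p * prod_list (map v (i # is)))"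
    by (simp add: sum_distrib_left sum_distrib_right mult_ac)
  also have "\<dots> = (\<Sum>i<d. \<Sum>is\<in>index_lists d k. iter_partial (i # is) G ?p * prod_list (map v (i # is)))"
    by (rule sum.swap)
  also have "\<dots> = (\<Sum>(i, is)\<in>{..<d} \<times> index_lists d k. iter_partial (i # is) G ?p * prod_list (map v (i # is)))"
    by (rule sum.cartesian_product)
  also have "\<dots> = (\<Sum>js\<in>index_lists d (Suc k). iter_partial js G ?p * prod_list (map v js))"
    unfolding index_lists_Suc
    by (subst sum.reindex) (auto simp: inj_on_def split_def)
  finally show ?thesis using D unfolding line_deriv_def by simp
qed

lemma abs_prod_list_le:
  fixes v :: "nat \<Rightarrow> real"
  assumes "set is \<subseteq> {..<d}"
  shows "\<bar>prod_list (map v is)\<bar> \<le> (\<Sum>i<d. \<bar>v i\<bar>) ^ length is"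
  using assms
proof (induction "is")
  case Nil then show ?case by simp
next
  case (Cons a "is")
  have "\<bar>v a\<bar> \<le> (\<Sum>i<d. \<bar>v i\<bar>)" using Cons.prems by (intro member_le_sum) auto
  moreover have "\<bar>prod_list (map v is)\<bar> \<le> (\<Sum>i<d. \<bar>v i\<bar>) ^ length is" using Cons by simp
  ultimately show ?case by (simp add: abs_mult mult_mono)
qed

lemma taylor_line_bound:
  assumes sm: "smooth_on d W G" and W: "box_open d W" and v: "v \<in> rvec d" and N: "N > 0"
    and seg: "\<forall>\<sigma>. 0 \<le> \<sigma> \<and> \<sigma> \<le> 1 \<longrightarrow> (\<lambda>j. u j + \<sigma> * v j) \<in> W"
    and M: "\<forall>\<sigma> is. 0 \<le> \<sigma> \<and> \<sigma> \<le> 1 \<and> is \<in> index_lists d N \<longrightarrow> \<bar>iter_partial is G (\<lambda>j. u j + \<sigma> * v j)\<bar> \<le> M"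
  shows "\<bar>G (\<lambda>j. u j + v j) - (\<Sum>m<N. \<Sum>is\<in>index_lists d m. iter_partial is G u * prod_list (map v is) / fact m)\<bar>
    \<le> real (card (index_lists d N)) * M * (\<Sum>i<d. \<bar>v i\<bar>) ^ N / fact N"
proof -
  have g0: "line_deriv d G u v 0 = (\<lambda>\<sigma>. G (\<lambda>j. u j + \<sigma> * v j))"
    by (rule ext) (simp add: line_deriv_def index_lists_0)
  obtain \<tau> where \<tau>: "0 < \<tau>" "\<tau> < 1"
    "line_deriv d G u v 0 1 = (\<Sum>m<N. line_deriv d G u v m 0 / fact m * (1 - 0) ^ m) + line_deriv d G u v N \<tau> / fact N * (1 - 0) ^ N"
    using Taylor[of N "line_deriv d G u v" "line_deriv d G u v 0" 0 1 0 1] N DERIV_line_deriv[OF sm W v] seg by auto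
  have gm0: "line_deriv d G u v m 0 = (\<Sum>is\<in>index_lists d m. iter_partial is G u * prod_list (map v is))" for m
    by (simp add: line_deriv_def)
  have G1: "line_deriv d G u v 0 1 = G (\<lambda>j. u j + v j)" using g0 by simp
  have "G (\<lambda>j. u j + v j) - (\<Sum>m<N. \<Sum>is\<in>index_lists d m. iter_partial is G u * prod_list (map v is) / fact m)
      = line_deriv d G u v N \<tau> / fact N"
    using \<tau>(3) unfolding G1 gm0 by (simp add: sum_divide_distrib)
  also have "\<bar>\<dots>\<bar> \<le> real (card (index_lists d N)) * M * (\<Sum>i<d. \<bar>v i\<bar>) ^ N / fact N"
  proof -
    have "\<bar>line_deriv d G u v N \<tau>\<bar> \<le> (\<Sum>is\<in>index_lists d N. \<bar>iter_partial is G (\<lambda>j. u j + \<tau> * v j) * prod_list (map v is)\<bar>)"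
      unfolding line_deriv_def by (rule sum_abs)
    also have "\<dots> \<le> (\<Sum>is\<in>index_lists d N. M * (\<Sum>i<d. \<bar>v i\<bar>) ^ N)"
    proof (rule sum_mono)
      fix "is" assume "is": "is \<in> index_lists d N"
      have a: "\<bar>iter_partial is G (\<lambda>j. u j + \<tau> * v j)\<bar> \<le> M" using M \<tau> "is" by auto
      have b: "\<bar>prod_list (map v is)\<bar> \<le> (\<Sum>i<d. \<bar>v i\<bar>) ^ N"
        using abs_prod_list_le[of "is" d v] "is" by (simp add: index_lists_def)
      show "\<bar>iter_partial is G (\<lambda>j. u j + \<tau> * v j) * prod_list (map v is)\<bar> \<le> M * (\<Sum>i<d. \<bar>v i\<bar>) ^ N"
        unfolding abs_mult by (rule mult_mono[OF a b]) (use a in auto)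
    qed
    also have "\<dots> = real (card (index_lists d N)) * M * (\<Sum>i<d. \<bar>v i\<bar>) ^ N" by simp
    finally show ?thesis by (simp add: divide_right_mono)
  qed
  finally show ?thesis .
qed

lemma sum_abs_power_le_powr:
  fixes a :: "nat \<Rightarrow> real"
  assumes N: "N > 0" and t: "0 \<le> t" and a: "\<And>i. i < d \<Longrightarrow> \<bar>a i\<bar> \<le> C * t powr \<beta>"
  shows "(\<Sum>i<d. \<bar>a i\<bar>) ^ N \<le> (real d * C) ^ N * t powr (\<beta> * real N)"
proof (cases "t = 0")
  case True
  then have "(\<Sum>i<d. \<bar>a i\<bar>) = 0" using a by (simp add: sum_nonneg_eq_0_iff order_antisym)
  then show ?thesis using True by (simp add: zero_power[OF N])
next
  case False
  have "(\<Sum>i<d. \<bar>a i\<bar>) ^ N \<le> (real d * C * t powr \<beta>) ^ N"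
    using sum_bounded_above[of "{..<d}" "\<lambda>i. \<bar>a i\<bar>" "C * t powr \<beta>"] a
    by (intro power_mono) (auto simp: sum_nonneg)
  also have "\<dots> = (real d * C) ^ N * t powr (\<beta> * real N)"
    using False t by (simp add: power_mult_distrib powr_power mult.commute)
  finally show ?thesis .
qed

lemma smooth_partials_bounded_near:
  assumes sm: "smooth_on d W G" and W: "box_open d W" and z: "z \<in> W"
    and L: "finite L" "\<And>is. is \<in> L \<Longrightarrow> set is \<subseteq> {..<d}"
  shows "\<exists>\<rho> M. \<rho> > 0 \<and> M \<ge> 0 \<and>
    (\<forall>v\<in>rvec d. (\<forall>i<d. \<bar>v i - z i\<bar> < \<rho>) \<longrightarrow> v \<in> W) \<and>
    (\<forall>v\<in>W. \<forall>is\<in>L. (\<forall>i<d. \<bar>v i - z i\<bar> < \<rho>) \<longrightarrow> \<bar>iter_partial is G v\<bar> \<le> M)"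
proof -
  have Wr: "W \<subseteq> rvec d" using W by (simp add: box_open_def)
  obtain \<rho>W where \<rho>W: "\<rho>W > 0" "\<forall>v\<in>rvec d. (\<forall>i<d. \<bar>v i - z i\<bar> < \<rho>W) \<longrightarrow> v \<in> W"
    using W z unfolding box_open_def by blast
  have "\<exists>r>0. \<forall>v\<in>W. (\<forall>i<d. \<bar>v i - z i\<bar> < r) \<longrightarrow> \<bar>iter_partial is G v - iter_partial is G z\<bar> < 1"
    if "is \<in> L" for "is"
    by (rule continuous_on_box[OF smooth_on_iter_partial(1)[OF sm L(2)[OF that]] z Wr zero_less_one])
  then have "\<forall>is\<in>L. \<exists>r>0. \<forall>v\<in>W. (\<forall>i<d. \<bar>v i - z i\<bar> < r) \<longrightarrow>
      \<bar>iter_partial is G v - iter_partial is G z\<bar> < 1" by blast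
  from bchoice[OF this] obtain rf where rf: "\<forall>is\<in>L. rf is > 0 \<and> (\<forall>v\<in>W. (\<forall>i<d. \<bar>v i - z i\<bar> < rf is) \<longrightarrow>
      \<bar>iter_partial is G v - iter_partial is G z\<bar> < 1)" by blast
  define \<rho> where "\<rho> = Min (insert \<rho>W (rf ` L))"
  have \<rho>: "\<rho> > 0" "\<rho> \<le> \<rho>W" "\<And>is. is \<in> L \<Longrightarrow> \<rho> \<le> rf is"
    unfolding \<rho>_def using rf \<rho>W L(1) by (auto simp: Min_gr_iff)
  define M where "M = (\<Sum>is\<in>L. \<bar>iter_partial is G z\<bar>) + 1"
  have "M \<ge> 0" unfolding M_def by (simp add: sum_nonneg add_nonneg_nonneg)
  moreover have "\<forall>v\<in>rvec d. (\<forall>i<d. \<bar>v i - z i\<bar> < \<rho>) \<longrightarrow> v \<in> W"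
    using \<rho>W(2) \<rho>(2) by force
  moreover have "\<bar>iter_partial is G v\<bar> \<le> M"
    if v: "v \<in> W" "\<forall>i<d. \<bar>v i - z i\<bar> < \<rho>" and "is": "is \<in> L" for v "is"
  proof -
      have "\<forall>i<d. \<bar>v i - z i\<bar> < rf is" using v(2) \<rho>(3)[OF "is"] by force
      then have "\<bar>iter_partial is G v - iter_partial is G z\<bar> < 1" using rf v(1) "is" by blast
      moreover have "\<bar>iter_partial is G z\<bar> \<le> (\<Sum>is\<in>L. \<bar>iter_partial is G z\<bar>)"
        by (rule member_le_sum) (use "is" L(1) in auto)
      ultimately show ?thesis unfolding M_def by linarith
  qed
  ultimately show ?thesis using \<rho>(1) by blast
qed

lemma taylor_bound_in_box:
  assumes sm: "smooth_on d W G" and W: "box_open d W" and N: "N > 0"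
    and box: "\<And>v. v \<in> rvec d \<Longrightarrow> \<forall>i<d. \<bar>v i - z i\<bar> < \<rho> \<Longrightarrow> v \<in> W"
    and bound: "\<And>v is. v \<in> W \<Longrightarrow> \<forall>i<d. \<bar>v i - z i\<bar> < \<rho> \<Longrightarrow> is \<in> index_lists d N \<Longrightarrow>
      \<bar>iter_partial is G v\<bar> \<le> M"
    and u: "u \<in> rvec d" and v: "v \<in> rvec d" and close: "\<And>i. i < d \<Longrightarrow> \<bar>u i - z i\<bar> + \<bar>v i\<bar> < \<rho>"
  shows "\<bar>G (\<lambda>j. u j + v j) - (\<Sum>m<N. \<Sum>is\<in>index_lists d m. iter_partial is G u * prod_list (map v is) / fact m)\<bar>
    \<le> real (card (index_lists d N)) * M * (\<Sum>i<d. \<bar>v i\<bar>) ^ N / fact N"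
proof (rule taylor_line_bound[OF sm W v N])
  have seg: "(\<lambda>j. u j + \<sigma> * v j) \<in> W \<and> (\<forall>i<d. \<bar>u i + \<sigma> * v i - z i\<bar> < \<rho>)" if \<sigma>: "0 \<le> \<sigma>" "\<sigma> \<le> 1" for \<sigma>
  proof -
    have near: "\<forall>i<d. \<bar>u i + \<sigma> * v i - z i\<bar> < \<rho>"
    proof (intro allI impI)
      fix i assume i: "i < d"
      have "\<bar>\<sigma> * v i\<bar> \<le> \<bar>v i\<bar>" using \<sigma> by (simp add: abs_mult mult_left_le_one_le)
      moreover have "\<bar>u i + \<sigma> * v i - z i\<bar> \<le> \<bar>u i - z i\<bar> + \<bar>\<sigma> * v i\<bar>"
        using abs_triangle_ineq[of "u i - z i" "\<sigma> * v i"] by (simp add: algebra_simps)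
      ultimately show "\<bar>u i + \<sigma> * v i - z i\<bar> < \<rho>" using close[OF i] by linarith
    qed
    have "(\<lambda>j. u j + \<sigma> * v j) \<in> rvec d" using u v by (simp add: rvec_def)
    with near show ?thesis using box by blast
  qed
  show "\<forall>\<sigma>. 0 \<le> \<sigma> \<and> \<sigma> \<le> 1 \<longrightarrow> (\<lambda>j. u j + \<sigma> * v j) \<in> W" using seg by blast
  show "\<forall>\<sigma> is. 0 \<le> \<sigma> \<and> \<sigma> \<le> 1 \<and> is \<in> index_lists d N \<longrightarrow> \<bar>iter_partial is G (\<lambda>j. u j + \<sigma> * v j)\<bar> \<le> M"
    using seg bound by blast
qed

lemma map_restrict: "set is \<subseteq> {..<d} \<Longrightarrow> map (\<lambda>i. if i < d then f i else 0) is = map f is"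
  by (induction "is") auto

lemma taylor_holder_path_little_o:
  assumes sm: "smooth_on d W G" and W: "box_open d W" and N0: "N > 0" and Nb: "\<beta> * real N > 1"
    and box: "\<And>v. v \<in> rvec d \<Longrightarrow> \<forall>i<d. \<bar>v i - z i\<bar> < \<rho> \<Longrightarrow> v \<in> W"
    and bound: "\<And>v is. v \<in> W \<Longrightarrow> \<forall>i<d. \<bar>v i - z i\<bar> < \<rho> \<Longrightarrow> is \<in> index_lists d N \<Longrightarrow>
      \<bar>iter_partial is G v\<bar> \<le> M"
    and M: "M \<ge> 0" and T: "T > 0" and w: "w \<in> rvec d" and \<delta>: "\<And>t. \<delta> t \<in> rvec d"
    and hold: "\<And>t i. 0 \<le> t \<Longrightarrow> t \<le> T \<Longrightarrow> i < d \<Longrightarrow> \<bar>\<delta> t i\<bar> \<le> C * t powr \<beta>"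
    and close: "\<And>t i. 0 \<le> t \<Longrightarrow> t \<le> T \<Longrightarrow> i < d \<Longrightarrow> \<bar>w i - z i\<bar> + \<bar>\<delta> t i\<bar> < \<rho>"
  shows "little_o (\<lambda>t. G (\<lambda>j. w j + \<delta> t j) -
    (\<Sum>m<N. \<Sum>is\<in>index_lists d m. iter_partial is G w * prod_list (map (\<delta> t) is) / fact m))"
  (is "little_o (\<lambda>t. G (\<lambda>j. w j + \<delta> t j) - ?Tay t)")
proof (rule little_o_dominated[OF little_o_powr[OF Nb, of "real (card (index_lists d N)) * M * (real d * C) ^ N / fact N"] T])
  fix t assume t: "0 \<le> t" "t \<le> T"
  have "\<bar>G (\<lambda>j. w j + \<delta> t j) - ?Tay t\<bar> \<le> real (card (index_lists d N)) * M * (\<Sum>i<d. \<bar>\<delta> t i\<bar>) ^ N / fact N"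
    by (rule taylor_bound_in_box[OF sm W N0 box bound w \<delta> close[OF t]])
  also have "\<dots> \<le> real (card (index_lists d N)) * M * ((real d * C) ^ N * t powr (\<beta> * real N)) / fact N"
    using sum_abs_power_le_powr[OF N0 t(1), of d "\<delta> t" C \<beta>] hold[OF t] M
    by (intro divide_right_mono mult_left_mono) auto
  finally have "\<bar>G (\<lambda>j. w j + \<delta> t j) - ?Tay t\<bar>
      \<le> real (card (index_lists d N)) * M * (real d * C) ^ N / fact N * t powr (\<beta> * real N)"
    by (simp add: mult.assoc)
  then show "\<bar>G (\<lambda>j. w j + \<delta> t j) - ?Tay t\<bar>
      \<le> \<bar>real (card (index_lists d N)) * M * (real d * C) ^ N / fact N * t powr (\<beta> * real N)\<bar>"
    by (rule order_trans[OF _ abs_ge_self])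
qed

lemma smooth_little_o_perturbation:
  assumes sm: "smooth_on d W G" and W: "box_open d W"
    and box: "\<And>v. v \<in> rvec d \<Longrightarrow> \<forall>i<d. \<bar>v i - z i\<bar> < \<rho> \<Longrightarrow> v \<in> W"
    and bound: "\<And>v is. v \<in> W \<Longrightarrow> \<forall>i<d. \<bar>v i - z i\<bar> < \<rho> \<Longrightarrow> is \<in> index_lists d 1 \<Longrightarrow>
      \<bar>iter_partial is G v\<bar> \<le> M"
    and M: "M \<ge> 0" and T: "T > 0" and u: "\<And>t. u t \<in> rvec d" and \<epsilon>: "\<And>i. i < d \<Longrightarrow> little_o (\<epsilon> i)"
    and close: "\<And>t i. 0 \<le> t \<Longrightarrow> t \<le> T \<Longrightarrow> i < d \<Longrightarrow> \<bar>u t i - z i\<bar> + \<bar>\<epsilon> i t\<bar> < \<rho>"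
  shows "little_o (\<lambda>t. G (\<lambda>j. u t j + (if j < d then \<epsilon> j t else 0)) - G (u t))"
proof (rule little_o_dominated[OF little_o_scale[OF little_o_sum[OF finite_lessThan little_o_abs[OF \<epsilon>]]] T])
  fix t assume t: "0 \<le> t" "t \<le> T"
  have v: "(\<lambda>j. if j < d then \<epsilon> j t else 0) \<in> rvec d" by (simp add: rvec_def)
  have "\<bar>G (\<lambda>j. u t j + (if j < d then \<epsilon> j t else 0)) - (\<Sum>m<1. \<Sum>is\<in>index_lists d m.
      iter_partial is G (u t) * prod_list (map (\<lambda>j. if j < d then \<epsilon> j t else 0) is) / fact m)\<bar>
      \<le> real (card (index_lists d 1)) * M * (\<Sum>i<d. \<bar>if i < d then \<epsilon> i t else 0\<bar>) ^ 1 / fact 1"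
    by (rule taylor_bound_in_box[OF sm W _ box bound u v]) (use close[OF t] in simp_all)
  then show "\<bar>G (\<lambda>j. u t j + (if j < d then \<epsilon> j t else 0)) - G (u t)\<bar>
      \<le> \<bar>real (card (index_lists d 1)) * M * (\<Sum>i<d. \<bar>\<epsilon> i t\<bar>)\<bar>"
    using M by (simp add: index_lists_0)
qed simp

lemma taylor_expansion_little_o:
  fixes G :: "(nat \<Rightarrow> real) \<Rightarrow> real" and \<phi> :: "nat \<Rightarrow> real \<Rightarrow> real"
  assumes sm: "smooth_on d W G" and W: "box_open d W" and phi: "\<forall>i<d. \<phi> i \<in> Ro"
    and zW: "z \<in> W" and z: "\<And>i. i < d \<Longrightarrow> \<phi> i 0 = z i"
  obtains N \<rho> where "\<rho> > 0"
    and "\<And>R. R \<in> rvec d \<Longrightarrow> \<forall>i<d. \<bar>R i\<bar> < \<rho> \<Longrightarrow> (\<lambda>i. z i + R i) \<in> W"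
    and "\<And>R \<psi>. R \<in> rvec d \<Longrightarrow> \<forall>i<d. \<bar>R i\<bar> < \<rho> \<Longrightarrow> \<forall>i<d. fsim (\<psi> i) (\<lambda>t. \<phi> i t + R i) \<Longrightarrow>
      little_o (\<lambda>t. G (\<lambda>i. if i < d then \<psi> i t else 0) -
        (\<Sum>m<N. \<Sum>is\<in>index_lists d m. iter_partial is G (\<lambda>i. z i + R i) / fact m
            * prod_list (map (\<lambda>i. \<phi> i t - \<phi> i 0) is)))"
proof -
  have zr: "z \<in> rvec d" using zW W by (auto simp: box_open_def)
  obtain \<beta> t0 C where \<beta>: "\<beta> > 0" and t0: "t0 > 0" "t0 \<le> 1"
    and hold: "\<forall>i t. i < d \<and> 0 \<le> t \<and> t \<le> t0 \<longrightarrow> \<bar>\<phi> i t - \<phi> i 0\<bar> \<le> C * t powr \<beta>"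
    using Ro_holder_uniform[OF phi] by blast
  \<comment> \<open>The increments are O(t^\<beta>), so their products of length N are o(t).\<close>
  obtain N where Nb: "\<beta> * real N > 1"
    using ex_less_of_nat_mult[OF \<beta>, of 1] by (auto simp: mult.commute)
  then have N0: "N > 0" by (cases N) auto
  have L: "finite (index_lists d N \<union> index_lists d 1)"
    "\<And>is. is \<in> index_lists d N \<union> index_lists d 1 \<Longrightarrow> set is \<subseteq> {..<d}"
    by (simp add: finite_index_lists) (auto simp: index_lists_def)
  obtain \<rho>c M where \<rho>c: "\<rho>c > 0" and M: "M \<ge> 0"
    and W_near: "\<forall>v\<in>rvec d. (\<forall>i<d. \<bar>v i - z i\<bar> < \<rho>c) \<longrightarrow> v \<in> W"
    and bound: "\<forall>v\<in>W. \<forall>is\<in>index_lists d N \<union> index_lists d 1. (\<forall>i<d. \<bar>v i - z i\<bar> < \<rho>c) \<longrightarrow>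
      \<bar>iter_partial is G v\<bar> \<le> M"
    using smooth_partials_bounded_near[OF sm W zW L] by blast
  have box: "\<And>v. v \<in> rvec d \<Longrightarrow> \<forall>i<d. \<bar>v i - z i\<bar> < \<rho>c \<Longrightarrow> v \<in> W" using W_near by blast
  define \<rho> where "\<rho> = \<rho>c / 3"
  have \<rho>: "\<rho> > 0" using \<rho>c by (simp add: \<rho>_def)
  show ?thesis
  proof (rule that[of \<rho> N])
    show "\<rho> > 0" by (fact \<rho>)
    show "(\<lambda>i. z i + R i) \<in> W" if "R \<in> rvec d" "\<forall>i<d. \<bar>R i\<bar> < \<rho>" for R
      by (rule box) (use that zr \<rho> in \<open>auto simp: rvec_def \<rho>_def\<close>)
  next
    fix R \<psi> assume R: "R \<in> rvec d" "\<forall>i<d. \<bar>R i\<bar> < \<rho>" and psi: "\<forall>i<d. fsim (\<psi> i) (\<lambda>t. \<phi> i t + R i)"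
    define w where "w = (\<lambda>i. z i + R i)"
    define dl where "dl = (\<lambda>t i. if i < d then \<phi> i t - \<phi> i 0 else 0)"
    define \<epsilon> where "\<epsilon> = (\<lambda>i t. \<psi> i t - (\<phi> i t + R i))"
    define vp where "vp = (\<lambda>t i. if i < d then \<epsilon> i t else 0)"
    have wr: "w \<in> rvec d" using zr R(1) unfolding w_def rvec_def by auto
    have dlr: "dl t \<in> rvec d" and vpr: "vp t \<in> rvec d" for t unfolding dl_def vp_def rvec_def by auto
    have eps_lo: "\<And>i. i < d \<Longrightarrow> little_o (\<epsilon> i)" using psi unfolding \<epsilon>_def fsim_def by simp
    obtain t1 where t1: "t1 > 0" "\<forall>t. 0 \<le> t \<and> t \<le> t1 \<longrightarrow> (\<forall>i<d. \<bar>\<phi> i t - \<phi> i 0\<bar> \<le> \<rho> / 2)"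
      using tendsto_at_right_uniform_bound[of d "\<lambda>i t. \<phi> i t - \<phi> i 0" "\<rho> / 2"] Ro_tendsto phi \<rho> by auto
    obtain t2 where t2: "t2 > 0" "\<forall>t. 0 \<le> t \<and> t \<le> t2 \<longrightarrow> (\<forall>i<d. \<bar>\<epsilon> i t\<bar> \<le> \<rho> / 2)"
      using tendsto_at_right_uniform_bound[of d \<epsilon> "\<rho> / 2"] eps_lo little_o_tendsto \<rho>
      by (auto simp: little_o_def)
    define T where "T = min t0 (min t1 t2)"
    have T: "T > 0" using t0 t1 t2 by (simp add: T_def)
    have small: "\<bar>dl t i\<bar> \<le> \<rho> / 2" "\<bar>vp t i\<bar> \<le> \<rho> / 2" "\<bar>dl t i\<bar> \<le> C * t powr \<beta>"
      if "0 \<le> t" "t \<le> T" "i < d" for t i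
      using t1 t2 hold that unfolding dl_def vp_def T_def by auto
    have boundN: "\<And>v is. v \<in> W \<Longrightarrow> \<forall>i<d. \<bar>v i - z i\<bar> < \<rho>c \<Longrightarrow> is \<in> index_lists d N \<Longrightarrow>
        \<bar>iter_partial is G v\<bar> \<le> M"
      and bound1: "\<And>v is. v \<in> W \<Longrightarrow> \<forall>i<d. \<bar>v i - z i\<bar> < \<rho>c \<Longrightarrow> is \<in> index_lists d 1 \<Longrightarrow>
        \<bar>iter_partial is G v\<bar> \<le> M"
      using bound by blast+
    define Tay where "Tay = (\<lambda>t. \<Sum>m<N. \<Sum>is\<in>index_lists d m. iter_partial is G w * prod_list (map (dl t) is) / fact m)"
    have loA: "little_o (\<lambda>t. G (\<lambda>j. w j + dl t j) - Tay t)"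
      unfolding Tay_def
    proof (rule taylor_holder_path_little_o[OF sm W N0 Nb box boundN M T wr dlr])
      show "\<bar>dl t i\<bar> \<le> C * t powr \<beta>" if "0 \<le> t" "t \<le> T" "i < d" for t i
        using small(3)[OF that] .
      show "\<bar>w i - z i\<bar> + \<bar>dl t i\<bar> < \<rho>c" if "0 \<le> t" "t \<le> T" "i < d" for t i
        using small(1)[OF that] R(2) that \<rho> unfolding w_def \<rho>_def by auto
    qed
    have loB: "little_o (\<lambda>t. G (\<lambda>j. (w j + dl t j) + vp t j) - G (\<lambda>j. w j + dl t j))"
      unfolding vp_def
    proof (rule smooth_little_o_perturbation[OF sm W box bound1 M T _ eps_lo])
      show "(\<lambda>j. w j + dl t j) \<in> rvec d" for t using wr dlr unfolding rvec_def by auto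
      show "\<bar>w i + dl t i - z i\<bar> + \<bar>\<epsilon> i t\<bar> < \<rho>c" if "0 \<le> t" "t \<le> T" "i < d" for t i
        using small(1,2)[OF that] R(2) that \<rho> unfolding w_def vp_def \<rho>_def by auto
    qed
    have "(\<lambda>i. if i < d then \<psi> i t else 0) = (\<lambda>j. (w j + dl t j) + vp t j)" for t
      using R(1) zr z unfolding w_def dl_def vp_def \<epsilon>_def rvec_def by auto
    moreover have "Tay t = (\<Sum>m<N. \<Sum>is\<in>index_lists d m. iter_partial is G (\<lambda>i. z i + R i) / fact m
            * prod_list (map (\<lambda>i. \<phi> i t - \<phi> i 0) is))" for t
      unfolding Tay_def w_def dl_def
      by (intro sum.cong refl) (simp add: index_lists_def map_restrict)
    ultimately show "little_o (\<lambda>t. G (\<lambda>i. if i < d then \<psi> i t else 0) -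
        (\<Sum>m<N. \<Sum>is\<in>index_lists d m. iter_partial is G (\<lambda>i. z i + R i) / fact m
            * prod_list (map (\<lambda>i. \<phi> i t - \<phi> i 0) is)))"
      using little_o_add[OF loB loA] by (elim little_o_cong) simp
  qed
qed

section \<open>Quasi-standard smooth maps\<close>

text \<open>A translation of the point y by r moves only the last n coordinates of the
  concatenation (p, y).\<close>

definition shift_coords :: "nat \<Rightarrow> nat \<Rightarrow> (nat \<Rightarrow> real) \<Rightarrow> nat \<Rightarrow> real" where
  "shift_coords pd n r = (\<lambda>i. if pd \<le> i \<and> i < pd + n then r (i - pd) else 0)"

definition standard_expansion ::
  "nat \<Rightarrow> (nat \<Rightarrow> fermat) set \<Rightarrow> ((nat \<Rightarrow> fermat) \<Rightarrow> fermat) \<Rightarrow> (nat \<Rightarrow> fermat) \<Rightarrow> real \<Rightarrow>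
    'j set \<Rightarrow> ((nat \<Rightarrow> real) \<Rightarrow> 'j \<Rightarrow> real) \<Rightarrow> ('j \<Rightarrow> real \<Rightarrow> real) \<Rightarrow> bool" where
  "standard_expansion n A f x \<rho> I c m \<longleftrightarrow> \<rho> > 0 \<and> finite I \<and> (\<forall>j\<in>I. m j \<in> Ro) \<and>
    (\<forall>y\<in>A. \<forall>r. (\<forall>i<n. \<bar>r i\<bar> < \<rho>) \<longrightarrow> (\<forall>i<n. fsim (frep (y i)) (\<lambda>t. frep (x i) t + r i)) \<longrightarrow>
      f y = fclass (\<lambda>t. \<Sum>j\<in>I. c r j * m j t)) \<and>
    (\<forall>rs. (\<forall>i<n. (\<lambda>k. rs k i) \<longlonglongrightarrow> 0) \<longrightarrow> (\<forall>k i. i < n \<longrightarrow> \<bar>rs k i\<bar> < \<rho>) \<longrightarrow>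
      (\<forall>j\<in>I. (\<lambda>k. c (rs k) j) \<longlonglongrightarrow> c (\<lambda>i. 0) j))"

lemma qs_smooth_standard_expansion:
  assumes A: "A \<subseteq> fvec n" and f: "qs_smooth n A f" and x: "x \<in> A"
  shows "\<exists>\<rho> I (c :: (nat \<Rightarrow> real) \<Rightarrow> nat \<times> nat list \<Rightarrow> real) m. standard_expansion n A f x \<rho> I c m"
proof -
  obtain V pd P p G where V: "ropen n V" "x \<in> fext_set n V" and P: "ropen pd P" "p \<in> fext_set pd P"
    and sm: "smooth_on (pd + n) (rprod pd n P V) G"
    and fG: "\<forall>y \<in> fext_set n V \<inter> A. f y = fextend (pd + n) G (vconcat pd p y)"
    using f x unfolding qs_smooth_def by blast
  define d where "d = pd + n"
  define W where "W = rprod pd n P V"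
  define \<phi> where "\<phi> = (\<lambda>i. frep (vconcat pd p x i))"
  define z where "z = vconcat pd (stv pd p) (stv n x)"
  have W: "box_open d W" unfolding W_def d_def by (rule box_open_rprod[OF P(1) V(1)])
  have Wr: "W \<subseteq> rvec d" using W by (simp add: box_open_def)
  have phi: "\<forall>i<d. \<phi> i \<in> Ro" unfolding \<phi>_def by (simp add: frep_Ro)
  have zW: "z \<in> W" unfolding z_def W_def rprod_def using P(2) V(2) unfolding fext_set_def by auto
  have z: "\<phi> i 0 = z i" if "i < d" for i
    using that unfolding z_def \<phi>_def d_def vconcat_def stv_def st_def by auto
  obtain \<rho>V where \<rho>V: "\<rho>V > 0" "\<forall>v\<in>rvec n. (\<forall>i<n. \<bar>v i - stv n x i\<bar> < \<rho>V) \<longrightarrow> v \<in> V"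
    using ropen_imp_box_open[OF V(1)] V(2) unfolding box_open_def fext_set_def by blast
  show ?thesis
  proof (rule taylor_expansion_little_o[OF sm[folded W_def d_def] W phi zW z])
    fix N \<rho>0 assume \<rho>0: "\<rho>0 > 0"
      and inW: "\<And>R. R \<in> rvec d \<Longrightarrow> \<forall>i<d. \<bar>R i\<bar> < \<rho>0 \<Longrightarrow> (\<lambda>i. z i + R i) \<in> W"
      and expand: "\<And>R \<psi>. R \<in> rvec d \<Longrightarrow> \<forall>i<d. \<bar>R i\<bar> < \<rho>0 \<Longrightarrow> \<forall>i<d. fsim (\<psi> i) (\<lambda>t. \<phi> i t + R i) \<Longrightarrow>
        little_o (\<lambda>t. G (\<lambda>i. if i < d then \<psi> i t else 0) -
          (\<Sum>m<N. \<Sum>is\<in>index_lists d m. iter_partial is G (\<lambda>i. z i + R i) / fact m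
              * prod_list (map (\<lambda>i. \<phi> i t - \<phi> i 0) is)))"
    define \<rho> where "\<rho> = min \<rho>0 \<rho>V"
    define I where "I = Sigma {..<N} (index_lists d)"
    define c where "c = (\<lambda>r (m, is). iter_partial is G (\<lambda>i. z i + shift_coords pd n r i) / fact m)"
    define mon where "mon = (\<lambda>(m::nat, is) t. prod_list (map (\<lambda>i. \<phi> i t - \<phi> i 0) is))"
    have shift: "shift_coords pd n r \<in> rvec d" "\<forall>i<d. \<bar>shift_coords pd n r i\<bar> < \<rho>0"
      if "\<forall>i<n. \<bar>r i\<bar> < \<rho>" for r
      using that \<rho>0 unfolding shift_coords_def d_def \<rho>_def rvec_def by auto
    have "standard_expansion n A f x \<rho> I c mon"
      unfolding standard_expansion_def
    proof (intro conjI ballI allI impI)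
      show "\<rho> > 0" using \<rho>0 \<rho>V(1) by (simp add: \<rho>_def)
      show "finite I" unfolding I_def by (simp add: finite_index_lists)
      show "mon j \<in> Ro" if "j \<in> I" for j
        using phi that unfolding mon_def I_def index_lists_def
        by (auto intro!: Ro_prod_list Ro_diff Ro_const)
    next
      fix y r assume y: "y \<in> A" and r: "\<forall>i<n. \<bar>r i\<bar> < \<rho>"
        and yx: "\<forall>i<n. fsim (frep (y i)) (\<lambda>t. frep (x i) t + r i)"
      have "stv n y \<in> V"
      proof -
        have "stv n y i - stv n x i = r i" if "i < n" for i
          using fsim_at_0[OF yx[rule_format, OF that]] that by (simp add: stv_def st_def)
        then show ?thesis using \<rho>V(2) r unfolding \<rho>_def stv_def rvec_def by auto
      qed
      then have yV: "y \<in> fext_set n V" using y A unfolding fext_set_def by auto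
      have "\<forall>i<d. fsim (frep (vconcat pd p y i)) (\<lambda>t. \<phi> i t + shift_coords pd n r i)"
        using yx unfolding \<phi>_def shift_coords_def vconcat_def d_def by (auto simp: fsim_refl)
      then have "little_o (\<lambda>t. G (\<lambda>i. if i < d then frep (vconcat pd p y i) t else 0) -
          (\<Sum>m<N. \<Sum>is\<in>index_lists d m. iter_partial is G (\<lambda>i. z i + shift_coords pd n r i) / fact m
              * prod_list (map (\<lambda>i. \<phi> i t - \<phi> i 0) is)))"
        by (rule expand[OF shift[OF r]])
      moreover have "(\<Sum>m<N. \<Sum>is\<in>index_lists d m. iter_partial is G (\<lambda>i. z i + shift_coords pd n r i) / fact m
              * prod_list (map (\<lambda>i. \<phi> i t - \<phi> i 0) is)) = (\<Sum>j\<in>I. c r j * mon j t)" for t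
        unfolding I_def c_def mon_def by (simp add: sum.Sigma finite_index_lists split_def)
      ultimately have "fsim (\<lambda>t. G (\<lambda>i. if i < d then frep (vconcat pd p y i) t else 0)) (\<lambda>t. \<Sum>j\<in>I. c r j * mon j t)"
        unfolding fsim_def by simp
      then show "f y = fclass (\<lambda>t. \<Sum>j\<in>I. c r j * mon j t)"
        using fG yV y unfolding fextend_def d_def by (simp add: fclass_eqI)
    next
      fix rs j assume rs: "\<forall>i<n. (\<lambda>k. rs k i) \<longlonglongrightarrow> 0" "\<forall>k i. i < n \<longrightarrow> \<bar>rs k i\<bar> < \<rho>" and j: "j \<in> I"
      obtain m "is" where j: "j = (m, is)" and "is": "set is \<subseteq> {..<d}"
        using j unfolding I_def index_lists_def by auto
      have "(\<lambda>k. iter_partial is G (\<lambda>i. z i + shift_coords pd n (rs k) i)) \<longlonglongrightarrow> iter_partial is G z"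
      proof (rule continuous_on_tendsto_translates[OF smooth_on_iter_partial(1)[OF sm "is"[unfolded d_def]] _ Wr[unfolded W_def d_def]])
        show "z \<in> rprod pd n P V" using zW unfolding W_def .
        show "(\<lambda>i. z i + shift_coords pd n (rs k) i) \<in> rprod pd n P V" for k
          using inW[OF shift(1,2)] rs(2) unfolding W_def by blast
        show "(\<lambda>k. shift_coords pd n (rs k) i) \<longlonglongrightarrow> 0" if "i < pd + n" for i
          using rs(1) that unfolding shift_coords_def by (cases "pd \<le> i") auto
      qed
      moreover have "shift_coords pd n (\<lambda>i. 0) = (\<lambda>i. 0)" unfolding shift_coords_def by auto
      ultimately show "(\<lambda>k. c (rs k) j) \<longlonglongrightarrow> c (\<lambda>i. 0) j"
        unfolding c_def j by (auto intro: tendsto_divide tendsto_const)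
    qed
    then show ?thesis by blast
  qed
qed

lemma fclass_lincomb_limit:
  fixes m :: "'a \<Rightarrow> real \<Rightarrow> real" and m' :: "'b \<Rightarrow> real \<Rightarrow> real"
  assumes fin: "finite I" "finite J" and Ro: "\<And>j. j \<in> I \<Longrightarrow> m j \<in> Ro" "\<And>j. j \<in> J \<Longrightarrow> m' j \<in> Ro"
    and eq: "\<And>k. fclass (\<lambda>t. \<Sum>j\<in>I. c k j * m j t) = fclass (\<lambda>t. \<Sum>j\<in>J. c' k j * m' j t)"
    and lim: "\<And>j. j \<in> I \<Longrightarrow> (\<lambda>k. c k j) \<longlonglongrightarrow> e j" "\<And>j. j \<in> J \<Longrightarrow> (\<lambda>k. c' k j) \<longlonglongrightarrow> e' j"
  shows "fclass (\<lambda>t. \<Sum>j\<in>I. e j * m j t) = fclass (\<lambda>t. \<Sum>j\<in>J. e' j * m' j t)"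
proof -
  define mm where "mm = case_sum m m'"
  have split: "(\<Sum>j\<in>I <+> J. case_sum a (\<lambda>j. - a' j) j * mm j t)
      = (\<Sum>j\<in>I. a j * m j t) - (\<Sum>j\<in>J. a' j * m' j t)" for a a' t
    using fin by (simp add: sum.Plus mm_def sum_negf)
  have lincomb_Ro: "(\<lambda>t. \<Sum>j\<in>I. a j * m j t) \<in> Ro" "(\<lambda>t. \<Sum>j\<in>J. a' j * m' j t) \<in> Ro" for a a'
    using fin Ro by (auto intro!: Ro_sum Ro_scale)
  have "little_o (\<lambda>t. \<Sum>j\<in>I <+> J. case_sum (c k) (\<lambda>j. - c' k j) j * mm j t)" for k
    using fclass_eqD[OF lincomb_Ro eq] unfolding split fsim_def .
  moreover have "\<forall>j\<in>I <+> J. (\<lambda>k. case_sum (c k) (\<lambda>j. - c' k j) j) \<longlonglongrightarrow> case_sum e (\<lambda>j. - e' j) j"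
    using lim by (auto intro!: tendsto_minus)
  ultimately have "little_o (\<lambda>t. \<Sum>j\<in>I <+> J. case_sum e (\<lambda>j. - e' j) j * mm j t)"
    using fin by (intro little_o_lincomb_closed) auto
  then show ?thesis unfolding split by (intro fclass_eqI) (simp add: fsim_def)
qed

lemma standard_expansions_agree:
  assumes f: "standard_expansion n A f x \<rho>f I c m" and g: "standard_expansion n A g x \<rho>g J c' m'"
    and x: "x \<in> A" and Y: "\<And>k. Y k \<in> A" "\<And>k. f (Y k) = g (Y k)"
    and Yx: "\<And>k i. i < n \<Longrightarrow> fsim (frep (Y k i)) (\<lambda>t. frep (x i) t + r k i)"
    and r: "\<And>k i. i < n \<Longrightarrow> \<bar>r k i\<bar> < min \<rho>f \<rho>g" "\<And>i. i < n \<Longrightarrow> (\<lambda>k. r k i) \<longlonglongrightarrow> 0"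
  shows "f x = g x"
proof -
  have f_at: "\<And>y r. y \<in> A \<Longrightarrow> \<forall>i<n. \<bar>r i\<bar> < \<rho>f \<Longrightarrow> \<forall>i<n. fsim (frep (y i)) (\<lambda>t. frep (x i) t + r i) \<Longrightarrow>
      f y = fclass (\<lambda>t. \<Sum>j\<in>I. c r j * m j t)"
    and g_at: "\<And>y r. y \<in> A \<Longrightarrow> \<forall>i<n. \<bar>r i\<bar> < \<rho>g \<Longrightarrow> \<forall>i<n. fsim (frep (y i)) (\<lambda>t. frep (x i) t + r i) \<Longrightarrow>
      g y = fclass (\<lambda>t. \<Sum>j\<in>J. c' r j * m' j t)"
    using f g unfolding standard_expansion_def by blast+
  have eq: "fclass (\<lambda>t. \<Sum>j\<in>I. c (r k) j * m j t) = fclass (\<lambda>t. \<Sum>j\<in>J. c' (r k) j * m' j t)" for k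
  proof -
    have bounds: "\<forall>i<n. \<bar>r k i\<bar> < \<rho>f" "\<forall>i<n. \<bar>r k i\<bar> < \<rho>g" using r(1) by auto
    have "\<forall>i<n. fsim (frep (Y k i)) (\<lambda>t. frep (x i) t + r k i)" using Yx by blast
    then show ?thesis using f_at[OF Y(1) bounds(1)] g_at[OF Y(1) bounds(2)] Y(2)[of k] by simp
  qed
  have lim: "(\<lambda>k. c (r k) j) \<longlonglongrightarrow> c (\<lambda>i. 0) j" if "j \<in> I" for j
    using f r that unfolding standard_expansion_def by auto
  have lim': "(\<lambda>k. c' (r k) j) \<longlonglongrightarrow> c' (\<lambda>i. 0) j" if "j \<in> J" for j
    using g r that unfolding standard_expansion_def by auto
  have fin: "finite I" "finite J" and Ro: "\<And>j. j \<in> I \<Longrightarrow> m j \<in> Ro" "\<And>j. j \<in> J \<Longrightarrow> m' j \<in> Ro"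
    using f g unfolding standard_expansion_def by auto
  have "fclass (\<lambda>t. \<Sum>j\<in>I. c (\<lambda>i. 0) j * m j t) = fclass (\<lambda>t. \<Sum>j\<in>J. c' (\<lambda>i. 0) j * m' j t)"
    by (rule fclass_lincomb_limit[where c="\<lambda>k. c (r k)" and c'="\<lambda>k. c' (r k)", OF fin Ro eq lim lim'])
  moreover have "\<forall>i<n. fsim (frep (x i)) (\<lambda>t. frep (x i) t + 0)" by (simp add: fsim_refl)
  ultimately show ?thesis
    using f_at[OF x, of "\<lambda>i. 0"] g_at[OF x, of "\<lambda>i. 0"] f g unfolding standard_expansion_def by simp
qed

theorem theorem5:
  fixes n :: nat
    and A D :: "(nat \<Rightarrow> fermat) set"
    and f g :: "(nat \<Rightarrow> fermat) \<Rightarrow> fermat"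
  assumes "A \<subseteq> fvec n"
    and "qs_smooth n A f"
    and "qs_smooth n A g"
    and "D \<subseteq> A"
    and "subtopology (omega_topology n) A closure_of D = A"
    and "\<forall>x\<in>D. f x = g x"
  shows "\<forall>x\<in>A. f x = g x"
proof
  fix x assume x: "x \<in> A"
  obtain \<rho>f and I :: "(nat \<times> nat list) set" and c m where f: "standard_expansion n A f x \<rho>f I c m"
    using qs_smooth_standard_expansion[OF assms(1,2) x] by blast
  obtain \<rho>g and J :: "(nat \<times> nat list) set" and c' m' where g: "standard_expansion n A g x \<rho>g J c' m'"
    using qs_smooth_standard_expansion[OF assms(1,3) x] by blast
  have "min \<rho>f \<rho>g > 0" using f g by (simp add: standard_expansion_def)
  then show "f x = g x"
  proof (rule omega_closure_standard_translates[of x n A D, rotated 2])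
    fix Y r assume Y: "\<And>k. Y k \<in> D" and Yx: "\<And>k i. i < n \<Longrightarrow> fsim (frep (Y k i)) (\<lambda>t. frep (x i) t + r k i)"
      and r: "\<And>k i. i < n \<Longrightarrow> \<bar>r k i\<bar> < min \<rho>f \<rho>g" "\<And>i. i < n \<Longrightarrow> (\<lambda>k. r k i) \<longlonglongrightarrow> 0"
    have "\<And>k. Y k \<in> A" "\<And>k. f (Y k) = g (Y k)" using Y assms(4,6) by auto
    then show ?thesis by (rule standard_expansions_agree[OF f g x _ _ Yx r])
  qed (use assms(1,5) x in auto)
qed

end
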